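(* Let $q$ be a prime power and $n',k',n,k\in\mathbb{N}$. Let $(Q'^{(h)}=\mathrm{CSS}(Q'^{(h)}_X,Q'^{(h)}_Z;\mathrm{Enc}'^{(h)}_Z:\mathbb{F}_{q^{k'}}\to\mathbb{F}_q^{n'}/Q'^{(h)\perp}_X))_{h\in[4]}$ be a $4$-multiplication-friendly collection of CSS codes over $\mathbb{F}_q$, where $Q'^{(h)}$ has parameters $[[n',k',d'^{(h)}]]_q$, and let $(Q^{(h)}=\mathrm{CSS}(Q^{(h)}_X,Q^{(h)}_Z;\mathrm{Enc}^{(h)}_Z))_{h\in[3]}$ be a triple of CSS codes over $\mathbb{F}_{q^{k'}}$, with $Q^{(h)}$ having parameters $[[n,k,d^{(h)}]]_{q^{k'}}$, that supports a transversal $CCZ_{q^{k'}}$ gate. Fix $r\in\mathbb{N}$ with $3(r-1)<k'$ and $r\leq q$, a subset $A\subseteq\mathbb{F}_q$ with $|A|=r$, and an irreducible polynomial $\gamma(X)\in\mathbb{F}_q[X]$ of degree $k'$, so that $\mathbb{F}_{q^{k'}}=\mathbb{F}_q[X]/(\gamma(X))\cong\mathbb{F}_q[X]^{<k'}$. For $h\in[4]$ let $\mathrm{Enc}'^{(h)}_X$ be any $X$ encoding function compatible with $\mathrm{Enc}'^{(h)}_Z$ with respect to the trace form $(x,z)\mapsto\mathrm{tr}_{\mathbb{F}_{q^{k'}}/\mathbb{F}_q}(xz)$, and for $h\in[3]$ let $\mathrm{Enc}^{(h)}_X$ be any $X$ encoding function compatible with $\mathrm{Enc}^{(h)}_Z$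 with respect to the standard form $(x,z)\mapsto x\cdot z$ on $\mathbb{F}_{q^{k'}}^k$. For $h\in[3]$ define $\tilde Q^{(h)}=(Q'^{(h)}\circ Q^{(h)})|_S$, the restriction of the concatenated code (built with these encoding functions) to the $\mathbb{F}_q$-subspace $S=(\mathbb{F}_q[X]^{<r})^k\subseteq(\mathbb{F}_q[X]^{<k'})^k\cong\mathbb{F}_{q^{k'}}^k$, where $S$ is identified with $(\mathbb{F}_q^A)^k\cong\mathbb{F}_q^{rk}$ via $\mathrm{ev}_A$ applied componentwise. Then $(\tilde Q^{(h)})_{h\in[3]}$, with the restricted $Z$ encoding functions $\widetilde{\mathrm{Enc}}^{(h)}_Z:(\mathbb{F}_q^A)^k\to(\mathbb{F}_q^{n'})^n/\tilde Q^{(h)\perp}_X$, is a triple of CSS codes over $\mathbb{F}_q$ with parameters $[[n'n,\,rk,\,\geq d'^{(h)}d^{(h)}]]_q$ that supports a transversal $CCZ_q$ gate.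
   Context: Notation: $x\cdot y=\sum_ix_iy_i$, $x*y$ componentwise product, $V^\perp$ dual w.r.t. $\cdot$. $\mathbb{F}_q[X]^{<r}$ is the space of polynomials of degree $<r$; for $A\subseteq\mathbb{F}_q$, $\mathrm{ev}_A(f)=(f(a))_{a\in A}\in\mathbb{F}_q^A$ (an isomorphism $\mathbb{F}_q[X]^{<|A|}\to\mathbb{F}_q^A$). Composition of coset-valued maps $f:A\to\mathcal{P}(B)$, $g:B\to\mathcal{P}(C)$ is $(g\circ f)(x)=\bigcup_{y\in f(x)}g(y)$. A quantum CSS code $\mathrm{CSS}(Q_X,Q_Z)$ of length $n$ over $\mathbb{F}_q$ is a pair of subspaces $Q_X,Q_Z\subseteq\mathbb{F}_q^n$ with $Q_X^\perp\subseteq Q_Z$, with dimension $k=\dim Q_Z-\dim Q_X^\perp$ and distance $\min\{|y|:y\in(Q_X\setminus Q_Z^\perp)\cup(Q_Z\setminus Q_X^\perp)\}$; it is an $[[n,k,d]]_q$ code. $Z$ (resp. $X$) encoding functions are $\mathbb{F}_q$-linear isomorphisms $\mathrm{Enc}_Z:V\to Q_Z/Q_X^\perp$ (resp. $\mathrm{Enc}_X:V\to Q_X/Q_Z^\perp$) from a fixed $k$-dimensional $\mathbb{F}_q$-space $V$ (e.g. $\mathbb{F}_q^k$ or $\mathbb{F}_{q^k}$); they are compatible w.r.t. a bilinear form $B$ on $V$ if $B(x,z)=x'\cdot z'$ for all $x,z\in V$, $x'\in\mathrm{Enc}_X(x)$, $z'\in\mathrm{Enc}_Z(z)$. Concatenation: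 given an inner code $Q^{in}$ ($[[n^{in},k^{in}]]_{q^{in}}$) with encoding functions $\mathrm{Enc}^{in}_X,\mathrm{Enc}^{in}_Z$ on $\mathbb{F}_{q^{out}}$, $q^{out}=(q^{in})^{k^{in}}$, compatible w.r.t. $\mathrm{tr}_{\mathbb{F}_{q^{out}}/\mathbb{F}_{q^{in}}}(xz)$, and an outer code $Q^{out}$ ($[[n^{out},k^{out}]]_{q^{out}}$) with encoding functions on $\mathbb{F}_{q^{out}}^{k^{out}}$ compatible w.r.t. $x\cdot z$, the concatenated code $Q^{in}\circ Q^{out}$ is the CSS code over $\mathbb{F}_{q^{in}}$ of length $n^{in}n^{out}$ whose $X$ (resp. $Z$) space is the set of all vectors lying in some value of $\mathrm{Enc}_X=(\mathrm{Enc}^{in}_X)^{\oplus n^{out}}\circ\mathrm{Enc}^{out}_X$ (resp. $\mathrm{Enc}_Z=(\mathrm{Enc}^{in}_Z)^{\oplus n^{out}}\circ\mathrm{Enc}^{out}_Z$), with these encoding functions (domain $\mathbb{F}_{q^{out}}^{k^{out}}$ viewed as an $\mathbb{F}_{q^{in}}$-space of dimension $k^{in}k^{out}$). Restriction: for $Q=\mathrm{CSS}(Q_X,Q_Z;\mathrm{Enc}_Z)$ and a subspace $S$ of the domain, $Q|_S=\mathrm{CSS}(Q_X,\bigcup_{s\in S}\mathrm{Enc}_Z(s);\mathrm{Enc}_Z|_S)$. A triple of $[[n,k]]_q$ codes with $Z$ encoding functions on $\mathbb{F}_q^k$ supports a transversal $CCZ_q$ gate if there is $b\in\mathbb{F}_q^n$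 with $\sum_{j\in[k]}z^{(1)}_jz^{(2)}_jz^{(3)}_j=\sum_{j\in[n]}b_jz^{(1)\prime}_jz^{(2)\prime}_jz^{(3)\prime}_j$ for all $z^{(h)}\in\mathbb{F}_q^k$, $z^{(h)\prime}\in\mathrm{Enc}^{(h)}_Z(z^{(h)})$. A collection $(Q^{(h)})_{h\in[m]}$ of $[[n,k]]_q$ codes with $Z$ encoding functions $\mathrm{Enc}^{(h)}_Z:\mathbb{F}_{q^k}\to Q^{(h)}_Z/Q^{(h)\perp}_X$ is $m$-multiplication-friendly if there is an $\mathbb{F}_q$-linear $\mathrm{Dec}_Z:\mathbb{F}_q^n\to\mathbb{F}_{q^k}$ with $z_1\cdots z_m=\mathrm{Dec}_Z(z_1'*\cdots*z_m')$ for all $z_h\in\mathbb{F}_{q^k}$ and $z_h'\in\mathrm{Enc}^{(h)}_Z(z_h)$. *)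

theory Defs
  imports "HOL-Library.Function_Algebras" "HOL-Computational_Algebra.Polynomial_Factorial"
begin

text \<open>For F_q (a finite field type 'a) we use K = UNIV and mul = (*); for
F_{q^k'} = F_q[X]/(gamma) we use K = polys_lt k' and mul = (%x y. x * y mod gamma).\<close>

definition vecs :: "'s::zero set \<Rightarrow> 'i set \<Rightarrow> ('i \<Rightarrow> 's) set" where
  "vecs K I = {v. (\<forall>i. i \<notin> I \<longrightarrow> v i = 0) \<and> (\<forall>i\<in>I. v i \<in> K)}"

definition smul :: "('s \<Rightarrow> 's \<Rightarrow> 's) \<Rightarrow> 's \<Rightarrow> ('i \<Rightarrow> 's) \<Rightarrow> ('i \<Rightarrow> 's)" where
  "smul mul c v = (\<lambda>i. mul c (v i))"

definition dotp :: "('s \<Rightarrow> 's \<Rightarrow> 's::comm_monoid_add) \<Rightarrow> 'i set \<Rightarrow> ('i \<Rightarrow> 's) \<Rightarrow> ('i \<Rightarrow> 's) \<Rightarrow> 's" where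
  "dotp mul I u v = (\<Sum>i\<in>I. mul (u i) (v i))"

definition is_subspace :: "'s set \<Rightarrow> ('s \<Rightarrow> 's \<Rightarrow> 's) \<Rightarrow> 'i set \<Rightarrow> ('i \<Rightarrow> 's::ab_group_add) set \<Rightarrow> bool" where
  "is_subspace K mul I V \<longleftrightarrow> V \<subseteq> vecs K I \<and> 0 \<in> V \<and> (\<forall>u\<in>V. \<forall>v\<in>V. u + v \<in> V)
     \<and> (\<forall>c\<in>K. \<forall>v\<in>V. smul mul c v \<in> V)"

definition dual :: "'s set \<Rightarrow> ('s \<Rightarrow> 's \<Rightarrow> 's) \<Rightarrow> 'i set \<Rightarrow> ('i \<Rightarrow> 's::ab_group_add) set \<Rightarrow> ('i \<Rightarrow> 's) set" where
  "dual K mul I V = {u \<in> vecs K I. \<forall>v\<in>V. dotp mul I u v = 0}"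

definition lincomb :: "('s \<Rightarrow> 's \<Rightarrow> 's) \<Rightarrow> ('i \<Rightarrow> 's::ab_group_add) set \<Rightarrow> (('i \<Rightarrow> 's) \<Rightarrow> 's) \<Rightarrow> ('i \<Rightarrow> 's)" where
  "lincomb mul B c = (\<Sum>b\<in>B. smul mul (c b) b)"

definition has_dim :: "'s set \<Rightarrow> ('s \<Rightarrow> 's \<Rightarrow> 's) \<Rightarrow> ('i \<Rightarrow> 's::ab_group_add) set \<Rightarrow> nat \<Rightarrow> bool" where
  "has_dim K mul V d \<longleftrightarrow> (\<exists>B. finite B \<and> card B = d \<and> B \<subseteq> V \<and>
      (\<forall>c. (\<forall>b\<in>B. c b \<in> K) \<and> lincomb mul B c = 0 \<longrightarrow> (\<forall>b\<in>B. c b = 0)) \<and>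
      V = {lincomb mul B c | c. \<forall>b\<in>B. c b \<in> K})"

definition wt :: "'i set \<Rightarrow> ('i \<Rightarrow> 's::zero) \<Rightarrow> nat" where
  "wt I v = card {i \<in> I. v i \<noteq> 0}"

definition is_css :: "'s set \<Rightarrow> ('s \<Rightarrow> 's \<Rightarrow> 's) \<Rightarrow> 'i set \<Rightarrow> ('i \<Rightarrow> 's::ab_group_add) set \<Rightarrow> ('i \<Rightarrow> 's) set \<Rightarrow> bool" where
  "is_css K mul I QX QZ \<longleftrightarrow> is_subspace K mul I QX \<and> is_subspace K mul I QZ \<and> dual K mul I QX \<subseteq> QZ"

definition css_dim :: "'s set \<Rightarrow> ('s \<Rightarrow> 's \<Rightarrow> 's) \<Rightarrow> 'i set \<Rightarrow> ('i \<Rightarrow> 's::ab_group_add) set \<Rightarrow> ('i \<Rightarrow> 's) set \<Rightarrow> nat \<Rightarrow> bool" where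
  "css_dim K mul I QX QZ k \<longleftrightarrow> (\<exists>a b. has_dim K mul QZ a \<and> has_dim K mul (dual K mul I QX) b \<and> k = a - b)"

definition logicals :: "'s set \<Rightarrow> ('s \<Rightarrow> 's \<Rightarrow> 's) \<Rightarrow> 'i set \<Rightarrow> ('i \<Rightarrow> 's::ab_group_add) set \<Rightarrow> ('i \<Rightarrow> 's) set \<Rightarrow> ('i \<Rightarrow> 's) set" where
  "logicals K mul I QX QZ = (QX - dual K mul I QZ) \<union> (QZ - dual K mul I QX)"

definition css_dist :: "'s set \<Rightarrow> ('s \<Rightarrow> 's \<Rightarrow> 's) \<Rightarrow> 'i set \<Rightarrow> ('i \<Rightarrow> 's::ab_group_add) set \<Rightarrow> ('i \<Rightarrow> 's) set \<Rightarrow> nat \<Rightarrow> bool" where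
  "css_dist K mul I QX QZ d \<longleftrightarrow> (\<exists>y\<in>logicals K mul I QX QZ. wt I y = d) \<and> (\<forall>y\<in>logicals K mul I QX QZ. d \<le> wt I y)"

definition css_dist_ge :: "'s set \<Rightarrow> ('s \<Rightarrow> 's \<Rightarrow> 's) \<Rightarrow> 'i set \<Rightarrow> ('i \<Rightarrow> 's::ab_group_add) set \<Rightarrow> ('i \<Rightarrow> 's) set \<Rightarrow> nat \<Rightarrow> bool" where
  "css_dist_ge K mul I QX QZ D \<longleftrightarrow> (\<forall>y\<in>logicals K mul I QX QZ. D \<le> wt I y)"

text \<open>Encoding function: a linear isomorphism E from the domain Dom (with scalar action dsm of the
scalars K) onto the quotient Q / W, where each value E x is a coset v + W of W inside Q.
Z encoding: W = dual QX, Q = QZ. X encoding: W = dual QZ, Q = QX.\<close>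
definition is_enc :: "'s set \<Rightarrow> ('s \<Rightarrow> 's \<Rightarrow> 's) \<Rightarrow> ('i \<Rightarrow> 's::ab_group_add) set \<Rightarrow> ('i \<Rightarrow> 's) set
    \<Rightarrow> ('s \<Rightarrow> 'd::ab_group_add \<Rightarrow> 'd) \<Rightarrow> 'd set \<Rightarrow> ('d \<Rightarrow> ('i \<Rightarrow> 's) set) \<Rightarrow> bool" where
  "is_enc K mul W Q dsm Dom E \<longleftrightarrow>
     (\<forall>x\<in>Dom. \<exists>v\<in>Q. E x = (\<lambda>w. v + w) ` W) \<and>
     (\<forall>x\<in>Dom. \<forall>y\<in>Dom. \<forall>u\<in>E x. \<forall>v\<in>E y. u + v \<in> E (x + y)) \<and>
     (\<forall>c\<in>K. \<forall>x\<in>Dom. \<forall>u\<in>E x. smul mul c u \<in> E (dsm c x)) \<and>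
     inj_on E Dom \<and>
     (\<forall>v\<in>Q. \<exists>x\<in>Dom. v \<in> E x)"

definition compatible :: "('d \<Rightarrow> 'd \<Rightarrow> 's) \<Rightarrow> ('s \<Rightarrow> 's \<Rightarrow> 's::comm_monoid_add) \<Rightarrow> 'i set \<Rightarrow> 'd set
    \<Rightarrow> ('d \<Rightarrow> ('i \<Rightarrow> 's) set) \<Rightarrow> ('d \<Rightarrow> ('i \<Rightarrow> 's) set) \<Rightarrow> bool" where
  "compatible Bf mul I Dom EncX EncZ \<longleftrightarrow>
     (\<forall>x\<in>Dom. \<forall>z\<in>Dom. \<forall>x'\<in>EncX x. \<forall>z'\<in>EncZ z. Bf x z = dotp mul I x' z')"

definition transversal_ccz :: "'s set \<Rightarrow> ('s \<Rightarrow> 's \<Rightarrow> 's) \<Rightarrow> 'i set \<Rightarrow> 'j set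
    \<Rightarrow> (('j \<Rightarrow> 's) \<Rightarrow> ('i \<Rightarrow> 's::comm_monoid_add) set) \<Rightarrow> (('j \<Rightarrow> 's) \<Rightarrow> ('i \<Rightarrow> 's) set)
    \<Rightarrow> (('j \<Rightarrow> 's) \<Rightarrow> ('i \<Rightarrow> 's) set) \<Rightarrow> bool" where
  "transversal_ccz K mul I J E1 E2 E3 \<longleftrightarrow>
     (\<exists>b\<in>vecs K I. \<forall>z1\<in>vecs K J. \<forall>z2\<in>vecs K J. \<forall>z3\<in>vecs K J.
        \<forall>u1\<in>E1 z1. \<forall>u2\<in>E2 z2. \<forall>u3\<in>E3 z3.
          (\<Sum>j\<in>J. mul (mul (z1 j) (z2 j)) (z3 j)) = (\<Sum>i\<in>I. mul (mul (mul (b i) (u1 i)) (u2 i)) (u3 i)))"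

text \<open>F_q[X]^{<r}: polynomials of degree < r (the zero polynomial included, deg 0 = -infinity).\<close>
definition polys_lt :: "nat \<Rightarrow> 'a::zero poly set" where
  "polys_lt r = {p. p = 0 \<or> degree p < r}"

definition fmul :: "'a::field poly \<Rightarrow> 'a poly \<Rightarrow> 'a poly \<Rightarrow> 'a poly" where
  "fmul \<gamma> x y = (x * y) mod \<gamma>"

text \<open>Field trace tr_{F_{q^k'}/F_q}(x) = sum of Galois conjugates x^{q^i}, i < k' (a constant).\<close>
definition ftrace :: "'a::{finite,field} poly \<Rightarrow> 'a poly \<Rightarrow> 'a" where
  "ftrace \<gamma> x = coeff ((\<Sum>i<degree \<gamma>. x ^ (card (UNIV :: 'a set) ^ i)) mod \<gamma>) 0"

definition mult_friendly :: "nat \<Rightarrow> 'a::{finite,field} poly \<Rightarrow> nat \<Rightarrow> (nat \<Rightarrow> 'a poly \<Rightarrow> (nat \<Rightarrow> 'a) set) \<Rightarrow> bool" where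
  "mult_friendly m \<gamma> n' E \<longleftrightarrow>
     (\<exists>Dec :: (nat \<Rightarrow> 'a) \<Rightarrow> 'a poly.
        (\<forall>u\<in>vecs UNIV {..<n'}. Dec u \<in> polys_lt (degree \<gamma>)) \<and>
        (\<forall>u\<in>vecs UNIV {..<n'}. \<forall>v\<in>vecs UNIV {..<n'}. Dec (u + v) = Dec u + Dec v) \<and>
        (\<forall>c. \<forall>u\<in>vecs UNIV {..<n'}. Dec (smul (*) c u) = smult c (Dec u)) \<and>
        (\<forall>z u. (\<forall>h<m. z h \<in> polys_lt (degree \<gamma>) \<and> u h \<in> E h (z h)) \<longrightarrow>
            (\<Prod>h<m. z h) mod \<gamma> = Dec (\<Prod>h<m. u h)))"

text \<open>(Enc_in)^{oplus n} o Enc_out, on vectors indexed by (outer position j < n, inner position i < n').\<close>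
definition concat_enc :: "nat \<Rightarrow> nat \<Rightarrow> ('a::zero poly \<Rightarrow> (nat \<Rightarrow> 'a) set) \<Rightarrow> ('d \<Rightarrow> (nat \<Rightarrow> 'a poly) set)
     \<Rightarrow> 'd \<Rightarrow> (nat \<times> nat \<Rightarrow> 'a) set" where
  "concat_enc n n' Ein Eout x =
     (\<Union>y\<in>Eout x. {w \<in> vecs UNIV ({..<n} \<times> {..<n'}). \<forall>j<n. (\<lambda>i. w (j, i)) \<in> Ein (y j)})"

text \<open>The inverse of componentwise ev_A on S = (F_q[X]^{<r})^k, as a coset(set)-valued map.\<close>
definition ev_inv :: "nat \<Rightarrow> nat \<Rightarrow> 'a::comm_ring set \<Rightarrow> (nat \<times> 'a \<Rightarrow> 'a) \<Rightarrow> (nat \<Rightarrow> 'a poly) set" where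
  "ev_inv k r A z = {s \<in> vecs (polys_lt r) {..<k}. \<forall>j<k. \<forall>a\<in>A. poly (s j) a = z (j, a)}"

definition space_of :: "'d set \<Rightarrow> ('d \<Rightarrow> 'v set) \<Rightarrow> 'v set" where
  "space_of D E = (\<Union>x\<in>D. E x)"

end

theory Submission
  imports Defs "HOL-Library.FuncSet"
begin

text \<open>Compatibility with the trace form makes concatenation turn outer pairings into inner ones:
  if \<open>x\<^sub>c, z\<^sub>c\<close> concatenate outer words \<open>x, z\<close> then \<open>x\<^sub>c \<cdot> z\<^sub>c = tr (x \<cdot> z)\<close>. The trace form is
  nondegenerate (this already follows from compatibility), so the dual of the concatenated \<open>X\<close>
  space is exactly the set of concatenated encodings of the zero message. This gives the CSS
  condition, the coset structure of the restricted \<open>Z\<close> encoding (a message in \<open>(\<bbbF>\<^sub>q\<^sup>A)\<^sup>k\<close> is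
  interpolated by polynomials of degree \<open>< r\<close>), the dimension \<open>r k\<close> by counting cosets, and the
  distance bound blockwise: a nontrivial logical operator has at least \<open>d\<close> nonzero outer symbols,
  each carried by a nontrivial inner logical operator.

  For the gate, \<open>3 (r - 1) < k'\<close> means the product \<open>s\<^sub>1 s\<^sub>2 s\<^sub>3\<close> of interpolating polynomials is
  already reduced modulo \<open>\<gamma>\<close>, so \<open>\<Sum>\<^sub>a\<^sub>\<in>\<^sub>A z\<^sub>1 z\<^sub>2 z\<^sub>3\<close> is a linear functional of it, i.e.
  \<open>tr (\<beta> s\<^sub>1 s\<^sub>2 s\<^sub>3)\<close> for some \<open>\<beta>\<close>. The outer transversal gate rewrites \<open>\<Sum>\<^sub>j s\<^sub>1 s\<^sub>2 s\<^sub>3\<close> as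
  \<open>\<Sum>\<^sub>i b\<^sub>i y\<^sub>1 y\<^sub>2 y\<^sub>3\<close> on outer codewords, and multiplication-friendliness, with the fourth inner
  code encoding \<open>\<beta> b\<^sub>i\<close>, turns each \<open>tr (\<beta> b\<^sub>i y\<^sub>1 y\<^sub>2 y\<^sub>3)\<close> into a linear combination of
  products of the physical qudits.\<close>

section \<open>Vectors, subspaces and duality\<close>

lemma sum_fun_apply: "(\<Sum>a\<in>A. f a) x = (\<Sum>a\<in>A. f a x)"
  by (induct A rule: infinite_finite_induct) auto

lemma vecs_component: "y \<in> vecs K I \<Longrightarrow> 0 \<in> K \<Longrightarrow> y j \<in> K"
  by (cases "j \<in> I") (auto simp: vecs_def)

lemma bij_betw_vecs_PiE:
  fixes I :: "'i set"
  shows "bij_betw (\<lambda>v. restrict v I) (vecs (UNIV :: 'a::zero set) I) (I \<rightarrow>\<^sub>E (UNIV :: 'a set))"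
proof (rule bij_betwI[where g="\<lambda>g i. if i \<in> I then g i else 0"])
  show "(\<lambda>i. if i \<in> I then restrict v I i else 0) = v" if "v \<in> vecs UNIV I" for v :: "'i \<Rightarrow> 'a"
    using that by (auto simp: vecs_def fun_eq_iff)
  show "restrict (\<lambda>i. if i \<in> I then g i else 0) I = g" if "g \<in> I \<rightarrow>\<^sub>E UNIV" for g :: "'i \<Rightarrow> 'a"
    using that by (auto simp: fun_eq_iff PiE_def extensional_def)
qed (auto simp: vecs_def)

lemma finite_vecs: "finite I \<Longrightarrow> finite (vecs (UNIV::'a::{finite,zero} set) I)"
  by (subst bij_betw_finite[OF bij_betw_vecs_PiE]) (simp add: finite_PiE)

lemma card_vecs: "finite I \<Longrightarrow> card (vecs (UNIV::'a::{finite,zero} set) I) = card (UNIV :: 'a set) ^ card I"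
  by (subst bij_betw_same_card[OF bij_betw_vecs_PiE]) (simp add: card_PiE)

lemma card_field_ge_2: "card (UNIV :: 'a::{finite,field} set) \<ge> 2"
  using card_mono[of "UNIV::'a set" "{0, 1}"] by simp

definition unit_vec :: "'i \<Rightarrow> 'i \<Rightarrow> 'a::zero_neq_one" where
  "unit_vec i = (\<lambda>x. if x = i then 1 else 0)"

interpretation fun_vs: vector_space "smul (*) :: 'a::field \<Rightarrow> ('i \<Rightarrow> 'a) \<Rightarrow> ('i \<Rightarrow> 'a)"
  by unfold_locales (auto simp: smul_def fun_eq_iff algebra_simps)

lemma is_subspace_add: "is_subspace K mul I V \<Longrightarrow> u \<in> V \<Longrightarrow> v \<in> V \<Longrightarrow> u + v \<in> V"
  and is_subspace_smul: "is_subspace K mul I V \<Longrightarrow> c \<in> K \<Longrightarrow> v \<in> V \<Longrightarrow> smul mul c v \<in> V"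
  and is_subspace_zero: "is_subspace K mul I V \<Longrightarrow> 0 \<in> V"
  and is_subspace_vecs: "is_subspace K mul I V \<Longrightarrow> v \<in> V \<Longrightarrow> v \<in> vecs K I"
  unfolding is_subspace_def by auto

lemma smul_minus_one: "smul (*) (-1) v = - (v :: 'i \<Rightarrow> 'a::ring_1)"
  by (simp add: smul_def fun_eq_iff)

lemma is_subspace_diff:
  fixes V :: "('i \<Rightarrow> 'a::ring_1) set"
  assumes "is_subspace UNIV (*) I V" "u \<in> V" "v \<in> V" shows "u - v \<in> V"
  using is_subspace_add[OF assms(1,2) is_subspace_smul[OF assms(1) _ assms(3), of "-1"]]
  by (simp add: smul_minus_one)

lemma is_subspace_imp_subspace: "is_subspace UNIV (*) I V \<Longrightarrow> fun_vs.subspace V"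
  unfolding is_subspace_def fun_vs.subspace_def by auto

lemma finite_is_subspace:
  "is_subspace UNIV (*) I V \<Longrightarrow> finite I \<Longrightarrow> finite (V :: ('i \<Rightarrow> 'a::{finite,field}) set)"
  using finite_vecs by (meson finite_subset is_subspace_def)

lemma has_dim_card:
  fixes V :: "('i \<Rightarrow> 'a::{finite,field}) set"
  assumes "has_dim UNIV (*) V d" shows "card V = card (UNIV :: 'a set) ^ d"
proof -
  obtain B where B: "finite B" "card B = d"
    and ind: "\<And>c. lincomb (*) B c = 0 \<Longrightarrow> (\<forall>b\<in>B. c b = 0)"
    and V: "V = {lincomb (*) B c |c. True}"
    using assms unfolding has_dim_def by auto
  have "lincomb (*) B c = lincomb (*) B (restrict c B)" for c
    unfolding lincomb_def by (intro sum.cong) auto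
  hence V': "V = lincomb (*) B ` (B \<rightarrow>\<^sub>E UNIV)"
    using V by (auto intro!: image_eqI[where x="restrict _ B"])
  have "inj_on (lincomb (*) B) (B \<rightarrow>\<^sub>E UNIV)"
  proof (rule inj_onI)
    fix c1 c2 assume c: "c1 \<in> B \<rightarrow>\<^sub>E UNIV" "c2 \<in> B \<rightarrow>\<^sub>E UNIV"
      and eq: "lincomb (*) B c1 = lincomb (*) B c2"
    have "lincomb (*) B (\<lambda>b. c1 b - c2 b) = lincomb (*) B c1 - lincomb (*) B c2"
      unfolding lincomb_def smul_def
      by (simp add: fun_eq_iff sum_fun_apply sum_subtractf left_diff_distrib)
    with eq ind[of "\<lambda>b. c1 b - c2 b"] have "\<forall>b\<in>B. c1 b = c2 b" by simp
    with c show "c1 = c2" by (auto simp: fun_eq_iff PiE_def extensional_def)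
  qed
  thus ?thesis using V' B by (simp add: card_image card_PiE)
qed

lemma has_dim_exists:
  fixes V :: "('i \<Rightarrow> 'a::{finite,field}) set"
  assumes "is_subspace UNIV (*) I V" "finite I" shows "\<exists>d. has_dim UNIV (*) V d"
proof -
  obtain B where B: "B \<subseteq> V" "fun_vs.independent B" "V \<subseteq> fun_vs.span B"
    using fun_vs.basis_exists by metis
  have fB: "finite B" using B(1) finite_is_subspace[OF assms] finite_subset by auto
  have "fun_vs.span B = V"
    using B fun_vs.span_minimal[OF B(1) is_subspace_imp_subspace[OF assms(1)]] by auto
  hence "has_dim UNIV (*) V (card B)"
    using B(1,2) fB unfolding has_dim_def fun_vs.dependent_finite[OF fB] fun_vs.span_finite[OF fB]
    by (intro exI[of _ B]) (auto simp: lincomb_def)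
  thus ?thesis by blast
qed

lemma dotp_insert: "finite F \<Longrightarrow> i \<notin> F \<Longrightarrow> dotp (*) (insert i F) x y = x i * y i + dotp (*) F x y"
  unfolding dotp_def by simp

lemma dotp_diff_smul:
  "dotp (*) F (x - smul (*) c v) y = dotp (*) F x y - c * dotp (*) F v (y :: 'i \<Rightarrow> 'a::comm_ring)"
  unfolding dotp_def smul_def by (simp add: algebra_simps sum_subtractf sum_distrib_left)

lemma dotp_smul_left: "dotp (*) F (smul (*) c v) y = c * dotp (*) F v (y :: 'i \<Rightarrow> 'a::comm_ring)"
  unfolding dotp_def smul_def by (simp add: sum_distrib_left mult.assoc)

lemma dotp_commute: "dotp (*) F x y = dotp (*) F y (x :: 'i \<Rightarrow> 'a::comm_ring)"
  unfolding dotp_def by (simp add: mult.commute)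

lemma dotp_cong: "(\<And>i. i \<in> F \<Longrightarrow> x i = x' i) \<Longrightarrow> dotp mul F x y = dotp mul F x' y"
  unfolding dotp_def by simp

lemma dual_antimono: "V \<subseteq> V' \<Longrightarrow> dual K mul I V' \<subseteq> dual K mul I V"
  by (auto simp: dual_def)

lemma is_subspace_dual: "is_subspace UNIV (*) I (dual UNIV (*) I (V :: ('i \<Rightarrow> 'a::field) set))"
  unfolding is_subspace_def dual_def
proof (intro conjI ballI allI subsetI)
  fix u v assume "u \<in> {u \<in> vecs UNIV I. \<forall>v\<in>V. dotp (*) I u v = 0}" "v \<in> {u \<in> vecs UNIV I. \<forall>v\<in>V. dotp (*) I u v = 0}"
  then show "u + v \<in> {u \<in> vecs UNIV I. \<forall>v\<in>V. dotp (*) I u v = 0}"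
    by (auto simp: vecs_def dotp_def sum.distrib distrib_right)
next
  fix c v assume "v \<in> {u \<in> vecs UNIV I. \<forall>v\<in>V. dotp (*) I u v = 0}"
  then show "smul (*) c v \<in> {u \<in> vecs UNIV I. \<forall>v\<in>V. dotp (*) I u v = 0}"
    by (auto simp: vecs_def dotp_smul_left) (simp add: smul_def)
qed (auto simp: vecs_def dotp_def)

lemma is_subspace_pivot_reduce:
  fixes V :: "('i \<Rightarrow> 'a::field) set"
  assumes V: "is_subspace UNIV (*) (insert i F) V" and v1: "v1 \<in> V" "v1 i = 1"
  shows "is_subspace UNIV (*) F ((\<lambda>v. v - smul (*) (v i) v1) ` V)"
  unfolding is_subspace_def
proof (intro conjI ballI allI subsetI)
  have v1vec: "v1 \<in> vecs UNIV (insert i F)" using V v1 is_subspace_vecs by blast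
  fix x assume "x \<in> (\<lambda>v. v - smul (*) (v i) v1) ` V"
  then obtain v where v: "v \<in> V" "x = v - smul (*) (v i) v1" by blast
  have "v \<in> vecs UNIV (insert i F)" using V v is_subspace_vecs by blast
  then have "x j = 0" if "j \<notin> F" for j
    using v v1vec v1(2) that by (cases "j = i") (auto simp: vecs_def smul_def)
  then show "x \<in> vecs UNIV F" by (simp add: vecs_def)
next
  show "0 \<in> (\<lambda>v. v - smul (*) (v i) v1) ` V"
    using is_subspace_zero[OF V] by (intro image_eqI[of _ _ 0]) (auto simp: smul_def fun_eq_iff)
next
  fix x y assume "x \<in> (\<lambda>v. v - smul (*) (v i) v1) ` V" "y \<in> (\<lambda>v. v - smul (*) (v i) v1) ` V"
  then obtain v w where vw: "v \<in> V" "w \<in> V" "x = v - smul (*) (v i) v1" "y = w - smul (*) (w i) v1"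
    by blast
  have "x + y = (v + w) - smul (*) ((v + w) i) v1"
    unfolding vw(3,4) by (simp add: smul_def fun_eq_iff algebra_simps)
  then show "x + y \<in> (\<lambda>v. v - smul (*) (v i) v1) ` V"
    using is_subspace_add[OF V vw(1,2)] by blast
next
  fix c x assume "x \<in> (\<lambda>v. v - smul (*) (v i) v1) ` V"
  then obtain v where v: "v \<in> V" "x = v - smul (*) (v i) v1" by blast
  have "smul (*) c x = smul (*) c v - smul (*) (smul (*) c v i) v1"
    unfolding v(2) by (simp add: smul_def fun_eq_iff algebra_simps)
  then show "smul (*) c x \<in> (\<lambda>v. v - smul (*) (v i) v1) ` V"
    using is_subspace_smul[OF V _ v(1)] by blast
qed

lemma dotp_unit_vec: "finite I \<Longrightarrow> i \<in> I \<Longrightarrow> dotp (*) I x (unit_vec i) = (x i :: 'a::comm_ring_1)"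
  by (simp add: dotp_def unit_vec_def if_distrib cong: if_cong)

lemma vecs_insert_vanishing: "w \<in> vecs UNIV F \<Longrightarrow> w \<in> vecs UNIV (insert i F)"
  and vecs_vanishing_insert: "w \<in> vecs UNIV (insert i F) \<Longrightarrow> w i = 0 \<Longrightarrow> w \<in> vecs UNIV F"
  by (auto simp: vecs_def)

lemma double_dual_insert_vanishing:
  fixes V :: "('i \<Rightarrow> 'a::field) set"
  assumes F: "finite F" "i \<notin> F"
    and IH: "\<And>V :: ('i \<Rightarrow> 'a) set. is_subspace UNIV (*) F V \<Longrightarrow> dual UNIV (*) F (dual UNIV (*) F V) \<subseteq> V"
    and V: "is_subspace UNIV (*) (insert i F) V" and vanish: "\<forall>v\<in>V. v i = 0"
  shows "dual UNIV (*) (insert i F) (dual UNIV (*) (insert i F) V) \<subseteq> V"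
proof
  fix u assume u: "u \<in> dual UNIV (*) (insert i F) (dual UNIV (*) (insert i F) V)"
  have VF: "is_subspace UNIV (*) F V"
    using V vanish by (auto simp: is_subspace_def intro: vecs_vanishing_insert)
  have "dotp (*) (insert i F) (unit_vec i) v = v i" for v :: "'i \<Rightarrow> 'a"
    using F by (subst dotp_commute) (simp add: dotp_unit_vec)
  then have "unit_vec i \<in> dual UNIV (*) (insert i F) V"
    using vanish by (auto simp: dual_def vecs_def unit_vec_def)
  then have ui: "u i = 0"
    using u F by (auto simp: dual_def dotp_unit_vec)
  have "u \<in> dual UNIV (*) F (dual UNIV (*) F V)"
  proof (unfold dual_def, intro CollectI conjI ballI)
    show "u \<in> vecs UNIV F" using u ui by (auto simp: dual_def intro: vecs_vanishing_insert)
    fix w assume w: "w \<in> {w \<in> vecs UNIV F. \<forall>v\<in>V. dotp (*) F w v = 0}"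
    then have wi: "w i = 0" using F(2) by (auto simp: vecs_def)
    have "w \<in> dual UNIV (*) (insert i F) V"
      using w F vanish by (auto simp: dual_def dotp_insert intro: vecs_insert_vanishing)
    then show "dotp (*) F u w = 0"
      using u F wi by (auto simp: dual_def dotp_insert)
  qed
  then show "u \<in> V" using IH[OF VF] by blast
qed

text \<open>Correcting \<open>w'\<close> along the unit vector at the pivot coordinate makes it annihilate the
  pivot \<open>v1\<close>, hence all of \<open>V\<close>.\<close>

lemma dual_pivot_lift:
  assumes F: "finite F" "i \<notin> F"
    and w': "w' \<in> dual UNIV (*) F ((\<lambda>v. v - smul (*) (v i) v1) ` V)"
  shows "w' - smul (*) (dotp (*) F w' v1) (unit_vec i) \<in> dual UNIV (*) (insert i F) (V :: ('i \<Rightarrow> 'a::field) set)"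
    (is "?w \<in> _")
proof (unfold dual_def, intro CollectI conjI ballI)
  have w'i: "w' i = 0" using w' F(2) by (simp add: dual_def vecs_def)
  have wF: "dotp (*) F ?w y = dotp (*) F w' y" for y
    using F(2) by (intro dotp_cong) (auto simp: smul_def unit_vec_def)
  show "?w \<in> vecs UNIV (insert i F)"
    using w' by (auto simp: dual_def vecs_def smul_def unit_vec_def)
  fix v assume "v \<in> V"
  then have "dotp (*) F w' (v - smul (*) (v i) v1) = 0" using w' by (auto simp: dual_def)
  then have "dotp (*) F w' v = v i * dotp (*) F w' v1"
    using dotp_diff_smul[of F v "v i" v1 w'] dotp_commute by (metis eq_iff_diff_eq_0)
  then show "dotp (*) (insert i F) ?w v = 0"
    unfolding dotp_insert[OF F] wF by (simp add: w'i smul_def unit_vec_def)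
qed

lemma double_dual_insert_pivot:
  fixes V :: "('i \<Rightarrow> 'a::field) set"
  assumes F: "finite F" "i \<notin> F"
    and IH: "\<And>V :: ('i \<Rightarrow> 'a) set. is_subspace UNIV (*) F V \<Longrightarrow> dual UNIV (*) F (dual UNIV (*) F V) \<subseteq> V"
    and V: "is_subspace UNIV (*) (insert i F) V" and v1: "v1 \<in> V" "v1 i = 1"
  shows "dual UNIV (*) (insert i F) (dual UNIV (*) (insert i F) V) \<subseteq> V"
proof
  fix u assume u: "u \<in> dual UNIV (*) (insert i F) (dual UNIV (*) (insert i F) V)"
  define V' where "V' = (\<lambda>v. v - smul (*) (v i) v1) ` V"
  have V'F: "is_subspace UNIV (*) F V'"
    unfolding V'_def using is_subspace_pivot_reduce[OF V v1] .
  have V'V: "V' \<subseteq> V"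
    unfolding V'_def using is_subspace_diff[OF V] is_subspace_smul[OF V _ v1(1)] by blast
  define u' where "u' = u - smul (*) (u i) v1"
  have "u' \<in> dual UNIV (*) F (dual UNIV (*) F V')"
  proof (unfold dual_def, intro CollectI conjI ballI)
    have "u \<in> vecs UNIV (insert i F)" "v1 \<in> vecs UNIV (insert i F)"
      using u is_subspace_vecs[OF V v1(1)] by (auto simp: dual_def)
    then have "u' \<in> vecs UNIV (insert i F)" by (auto simp: vecs_def u'_def smul_def)
    moreover have "u' i = 0" using v1(2) by (simp add: u'_def smul_def)
    ultimately show "u' \<in> vecs UNIV F" by (rule vecs_vanishing_insert)
    fix w' assume "w' \<in> {w \<in> vecs UNIV F. \<forall>v\<in>V'. dotp (*) F w v = 0}"
    then have w': "w' \<in> dual UNIV (*) F V'" by (simp add: dual_def)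
    define w where "w = w' - smul (*) (dotp (*) F w' v1) (unit_vec i)"
    have "dotp (*) (insert i F) u w = 0"
      using u dual_pivot_lift[OF F w'[unfolded V'_def]] by (auto simp: dual_def w_def)
    moreover have "w i = - dotp (*) F w' v1"
      using w' F(2) by (simp add: w_def dual_def vecs_def smul_def unit_vec_def)
    moreover have "dotp (*) F u w = dotp (*) F u w'"
      unfolding dotp_def using F(2) by (intro sum.cong) (auto simp: w_def smul_def unit_vec_def)
    ultimately have "dotp (*) F u w' = u i * dotp (*) F w' v1" by (simp add: dotp_insert[OF F])
    then show "dotp (*) F u' w' = 0"
      unfolding u'_def dotp_diff_smul by (simp add: dotp_commute[of F v1 w'])
  qed
  then have "u' \<in> V" using IH[OF V'F] V'V by blast
  then have "u' + smul (*) (u i) v1 \<in> V" using is_subspace_add[OF V] is_subspace_smul[OF V _ v1(1)] by blast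
  then show "u \<in> V" by (simp add: u'_def)
qed

lemma double_dual_subset:
  fixes V :: "('i \<Rightarrow> 'a::field) set"
  assumes "finite I" "is_subspace UNIV (*) I V"
  shows "dual UNIV (*) I (dual UNIV (*) I V) \<subseteq> V"
  using assms
proof (induction I arbitrary: V rule: finite_induct)
  case empty
  then have "dual UNIV (*) {} (dual UNIV (*) {} V) \<subseteq> {0}" by (auto simp: dual_def vecs_def fun_eq_iff)
  then show ?case using is_subspace_zero[OF empty.prems] by blast
next
  case (insert i F)
  show ?case
  proof (cases "\<forall>v\<in>V. v i = 0")
    case True
    show ?thesis by (rule double_dual_insert_vanishing[OF insert.hyps insert.IH insert.prems True])
  next
    case False
    then obtain v0 where v0: "v0 \<in> V" "v0 i \<noteq> 0" by auto
    have "smul (*) (inverse (v0 i)) v0 \<in> V" "smul (*) (inverse (v0 i)) v0 i = 1"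
      using is_subspace_smul[OF insert.prems _ v0(1)] v0(2) by (auto simp: smul_def)
    then show ?thesis using double_dual_insert_pivot[OF insert.hyps insert.IH insert.prems] by blast
  qed
qed

section \<open>Polynomials of bounded degree\<close>

lemma polys_lt_zero [simp]: "0 \<in> polys_lt k"
  by (simp add: polys_lt_def)

lemma polys_lt_const: "k > 0 \<Longrightarrow> [:c:] \<in> polys_lt k"
  by (simp add: polys_lt_def)

lemma polys_lt_mono: "p \<in> polys_lt r \<Longrightarrow> r \<le> k \<Longrightarrow> p \<in> polys_lt k"
  unfolding polys_lt_def by auto

lemma polys_lt_degree_le: "p \<in> polys_lt r \<Longrightarrow> degree p \<le> r - 1"
  by (auto simp: polys_lt_def)

lemma monom_in_polys_lt: "i < m \<Longrightarrow> monom c i \<in> polys_lt m"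
  by (simp add: polys_lt_def degree_monom_eq) (metis degree_monom_le le_less_trans)

context
  fixes p q :: "'a::field poly"
begin

lemma polys_lt_add: "p \<in> polys_lt k \<Longrightarrow> q \<in> polys_lt k \<Longrightarrow> p + q \<in> polys_lt k"
  unfolding polys_lt_def using degree_add_le_max[of p q] by auto

lemma polys_lt_diff: "p \<in> polys_lt k \<Longrightarrow> q \<in> polys_lt k \<Longrightarrow> p - q \<in> polys_lt k"
  unfolding polys_lt_def using degree_diff_le_max[of p q] by auto

lemma polys_lt_smult: "p \<in> polys_lt k \<Longrightarrow> smult c p \<in> polys_lt k"
  unfolding polys_lt_def using degree_smult_le le_less_trans by fastforce

lemma polys_lt_mod: "p \<in> polys_lt (degree q) \<Longrightarrow> p mod q = p"
  unfolding polys_lt_def by (auto intro: mod_poly_less)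

end

lemma polys_lt_sum: "(\<And>i. i \<in> S \<Longrightarrow> f i \<in> polys_lt k) \<Longrightarrow> (\<Sum>i\<in>S. f i :: 'a::field poly) \<in> polys_lt k"
  by (induct S rule: infinite_finite_induct) (auto intro: polys_lt_add)

lemma vecs_polys_lt_component: "y \<in> vecs (polys_lt m) I \<Longrightarrow> y j \<in> polys_lt m"
  by (rule vecs_component) simp_all

lemma vecs_polys_lt_add: "x \<in> vecs (polys_lt m) J \<Longrightarrow> y \<in> vecs (polys_lt m) J \<Longrightarrow> x + y \<in> vecs (polys_lt m) J"
  and vecs_polys_lt_diff: "x \<in> vecs (polys_lt m) J \<Longrightarrow> y \<in> vecs (polys_lt m) J \<Longrightarrow> x - y \<in> vecs (polys_lt m) J"
  for x y :: "'j \<Rightarrow> 'a::field poly"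
  by (auto simp: vecs_def intro: polys_lt_add polys_lt_diff)

lemma fmul_in_polys_lt: "(\<gamma>::'a::field poly) \<noteq> 0 \<Longrightarrow> fmul \<gamma> x y \<in> polys_lt (degree \<gamma>)"
  unfolding fmul_def polys_lt_def using degree_mod_less by blast

lemma fmul_commute: "fmul \<gamma> x y = fmul \<gamma> y x"
  by (simp add: fmul_def mult.commute)

lemma fmul_add_right: "fmul \<gamma> z (x + y) = fmul \<gamma> z x + fmul \<gamma> z y"
  by (simp add: fmul_def distrib_left poly_mod_add_left)

lemma fmul_diff_left: "fmul \<gamma> (x - y) z = fmul \<gamma> x z - fmul \<gamma> y z"
  by (simp add: fmul_def left_diff_distrib poly_mod_diff_left)

lemma fmul_zero [simp]: "fmul \<gamma> 0 x = 0" "fmul \<gamma> x 0 = 0"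
  by (simp_all add: fmul_def)

lemma fmul_assoc: "fmul \<gamma> (fmul \<gamma> a b) c = fmul \<gamma> a (fmul \<gamma> b c)"
  unfolding fmul_def by (metis mod_mult_left_eq mod_mult_right_eq mult.assoc)

lemma fmul_fmul_eq_mod: "fmul \<gamma> (fmul \<gamma> a b) c = (a * b * c) mod \<gamma>"
  unfolding fmul_def by (metis mod_mult_left_eq)

lemma fmul_one: "x \<in> polys_lt (degree \<gamma>) \<Longrightarrow> fmul \<gamma> 1 x = x"
  by (simp add: fmul_def polys_lt_mod)

lemma fmul_const: "x \<in> polys_lt (degree \<gamma>) \<Longrightarrow> fmul \<gamma> [:c:] x = smult c x"
  using polys_lt_mod[OF polys_lt_smult[of x _ c]] by (simp add: fmul_def)

lemma fmul_smult_right: "fmul \<gamma> a (smult c b) = smult c (fmul \<gamma> a b)"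
  by (simp add: fmul_def mod_smult_left)

lemma fmul_sum_right: "fmul \<gamma> a (\<Sum>i\<in>S. f i) = (\<Sum>i\<in>S. fmul \<gamma> a (f i))"
  by (induct S rule: infinite_finite_induct) (auto simp: fmul_add_right)

lemma smul_fmul_const:
  "x \<in> vecs (polys_lt (degree \<gamma>)) I \<Longrightarrow> smul (fmul \<gamma>) [:c:] x = (\<lambda>i. smult c (x i))"
  using fmul_const[OF vecs_component[of x]] by (simp add: smul_def)

definition poly_of_coeffs :: "nat \<Rightarrow> (nat \<Rightarrow> 'a::comm_monoid_add) \<Rightarrow> 'a poly" where
  "poly_of_coeffs r f = (\<Sum>i<r. monom (f i) i)"

lemma coeff_poly_of_coeffs: "coeff (poly_of_coeffs r f) i = (if i < r then f i else 0)"
  unfolding poly_of_coeffs_def coeff_sum coeff_monom by simp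

lemma poly_of_coeffs_coeff: "p \<in> polys_lt r \<Longrightarrow> poly_of_coeffs r (coeff p) = p"
  by (rule poly_eqI) (auto simp: coeff_poly_of_coeffs polys_lt_def coeff_eq_0)

lemma poly_of_coeffs_in_polys_lt: "poly_of_coeffs r f \<in> polys_lt r"
proof (cases "poly_of_coeffs r f = 0")
  case False
  have "degree (poly_of_coeffs r f) \<le> r - 1" by (rule degree_le) (auto simp: coeff_poly_of_coeffs)
  moreover have "r > 0" using False by (cases r) (auto simp: poly_of_coeffs_def)
  ultimately have "degree (poly_of_coeffs r f) < r" by linarith
  then show ?thesis by (simp add: polys_lt_def)
qed simp

lemma bij_betw_poly_of_coeffs:
  "bij_betw (poly_of_coeffs r) (vecs (UNIV :: 'a::comm_monoid_add set) {..<r}) (polys_lt r)"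
proof (rule bij_betwI[where g="\<lambda>p i. if i < r then coeff p i else 0"])
  show "poly_of_coeffs r (\<lambda>i. if i < r then coeff p i else 0) = p" if "p \<in> polys_lt r" for p :: "'a poly"
    using poly_of_coeffs_coeff[OF that] by (simp add: poly_of_coeffs_def)
  show "(\<lambda>i. if i < r then coeff (poly_of_coeffs r f) i else 0) = f" if "f \<in> vecs UNIV {..<r}" for f :: "nat \<Rightarrow> 'a"
    using that by (auto simp: coeff_poly_of_coeffs vecs_def fun_eq_iff)
qed (auto simp: vecs_def poly_of_coeffs_in_polys_lt)

lemma card_polys_lt: "card (polys_lt r :: 'a::{finite,comm_monoid_add} poly set) = card (UNIV :: 'a set) ^ r"
  by (metis bij_betw_same_card[OF bij_betw_poly_of_coeffs] card_vecs finite_lessThan card_lessThan)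

lemma poly_eq_sum_monom: "p \<in> polys_lt m \<Longrightarrow> p = (\<Sum>i<m. smult (coeff p i) (monom 1 i))"
  for p :: "'a::comm_semiring_1 poly"
  using poly_of_coeffs_coeff[of p m] by (simp add: poly_of_coeffs_def smult_monom)

lemma poly_eq_if_agree_on_card:
  fixes A :: "'a::field set"
  assumes "finite A" "card A = r" "p \<in> polys_lt r" "q \<in> polys_lt r" "\<forall>a\<in>A. poly p a = poly q a"
  shows "p = q"
proof (rule ccontr)
  assume ne: "p \<noteq> q"
  have "A \<subseteq> {x. poly (p - q) x = 0}" using assms(5) by auto
  then have "card A \<le> card {x. poly (p - q) x = 0}"
    using ne by (intro card_mono poly_roots_finite) simp_all
  also have "\<dots> \<le> degree (p - q)" using ne by (intro card_poly_roots_bound) simp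
  finally show False using polys_lt_diff[OF assms(3,4)] ne assms(2) by (simp add: polys_lt_def)
qed

lemma interpolation_exists:
  fixes A :: "'a::{finite,field} set"
  assumes "card A = r" "f \<in> vecs UNIV A"
  shows "\<exists>p\<in>polys_lt r. \<forall>a\<in>A. poly p a = f a"
proof -
  define ev where "ev p = (\<lambda>a. if a \<in> A then poly p a else 0)" for p :: "'a poly"
  have "inj_on ev (polys_lt r)"
  proof (rule inj_onI)
    fix p q assume pq: "p \<in> polys_lt r" "q \<in> polys_lt r" "ev p = ev q"
    have "poly p a = poly q a" if "a \<in> A" for a
      using fun_cong[OF pq(3), of a] that by (simp add: ev_def)
    then show "p = q" using poly_eq_if_agree_on_card[OF finite assms(1) pq(1,2)] by blast
  qed
  then have "card (ev ` polys_lt r) = card (vecs (UNIV :: 'a set) A)"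
    using assms(1) by (simp add: card_image card_polys_lt card_vecs)
  moreover have "ev ` polys_lt r \<subseteq> vecs UNIV A" by (auto simp: ev_def vecs_def)
  ultimately have "ev ` polys_lt r = vecs UNIV A"
    by (intro card_subset_eq) (simp_all add: finite_vecs)
  then obtain p where "p \<in> polys_lt r" "ev p = f" using assms(2) by (metis imageE)
  then show ?thesis by (auto simp: ev_def)
qed

definition linear_on_polys_lt :: "nat \<Rightarrow> ('a::field poly \<Rightarrow> 'a) \<Rightarrow> bool" where
  "linear_on_polys_lt m f \<longleftrightarrow> (\<forall>a\<in>polys_lt m. \<forall>b\<in>polys_lt m. f (a + b) = f a + f b) \<and>
     (\<forall>c. \<forall>a\<in>polys_lt m. f (smult c a) = c * f a)"

lemma linear_on_polys_lt_zero: "linear_on_polys_lt m f \<Longrightarrow> f 0 = 0"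
  using smult_0_left[of 0] unfolding linear_on_polys_lt_def by (metis polys_lt_zero mult_zero_left)

lemma linear_on_polys_lt_sum:
  assumes "linear_on_polys_lt m f" "\<And>i. i \<in> S \<Longrightarrow> g i \<in> polys_lt m"
  shows "f (\<Sum>i\<in>S. g i) = (\<Sum>i\<in>S. f (g i))"
  using assms(2)
proof (induct S rule: infinite_finite_induct)
  case (insert x F)
  then show ?case using assms(1) polys_lt_sum[of F g m] by (simp add: linear_on_polys_lt_def)
qed (simp_all add: linear_on_polys_lt_zero[OF assms(1)])

lemma linear_on_polys_lt_expand:
  assumes "linear_on_polys_lt m f" "p \<in> polys_lt m"
  shows "f p = (\<Sum>i<m. coeff p i * f (monom 1 i))"
proof -
  have "f p = (\<Sum>i<m. f (smult (coeff p i) (monom 1 i)))"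
    by (subst poly_eq_sum_monom[OF assms(2)], rule linear_on_polys_lt_sum[OF assms(1)])
      (auto intro: polys_lt_smult monom_in_polys_lt)
  also have "\<dots> = (\<Sum>i<m. coeff p i * f (monom 1 i))"
  proof (rule sum.cong)
    fix i assume "i \<in> {..<m}"
    then show "f (smult (coeff p i) (monom 1 i)) = coeff p i * f (monom 1 i)"
      using assms(1) monom_in_polys_lt[of i m 1] unfolding linear_on_polys_lt_def by blast
  qed simp
  finally show ?thesis .
qed

lemma finite_card_linear_functionals:
  fixes m :: nat
  defines "Fs \<equiv> {f :: 'a::{finite,field} poly \<Rightarrow> 'a. linear_on_polys_lt m f \<and> (\<forall>x. x \<notin> polys_lt m \<longrightarrow> f x = 0)}"
  shows "finite Fs" "card Fs \<le> card (UNIV :: 'a set) ^ m"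
proof -
  define \<psi> where "\<psi> f = (\<lambda>i. if i < m then f (monom 1 i) else 0)" for f :: "'a poly \<Rightarrow> 'a"
  have "inj_on \<psi> Fs"
  proof (rule inj_onI, rule ext)
    fix f g x assume fg: "f \<in> Fs" "g \<in> Fs" "\<psi> f = \<psi> g"
    have monoms: "f (monom 1 i) = g (monom 1 i)" if "i < m" for i
      using fun_cong[OF fg(3), of i] that by (simp add: \<psi>_def)
    show "f x = g x"
    proof (cases "x \<in> polys_lt m")
      case True
      have lin: "linear_on_polys_lt m f" "linear_on_polys_lt m g" using fg(1,2) by (simp_all add: Fs_def)
      have "f x = (\<Sum>i<m. coeff x i * f (monom 1 i))" by (rule linear_on_polys_lt_expand[OF lin(1) True])
      also have "\<dots> = (\<Sum>i<m. coeff x i * g (monom 1 i))" using monoms by simp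
      also have "\<dots> = g x" by (rule linear_on_polys_lt_expand[OF lin(2) True, symmetric])
      finally show ?thesis .
    qed (use fg(1,2) in \<open>simp add: Fs_def\<close>)
  qed
  moreover have sub: "\<psi> ` Fs \<subseteq> vecs UNIV {..<m}" by (auto simp: \<psi>_def vecs_def)
  ultimately show "finite Fs"
    using finite_vecs[of "{..<m}"] by (meson finite_imageD finite_subset finite_lessThan)
  have "card Fs = card (\<psi> ` Fs)" using \<open>inj_on \<psi> Fs\<close> by (simp add: card_image)
  also have "\<dots> \<le> card (vecs (UNIV :: 'a set) {..<m})" by (rule card_mono[OF finite_vecs sub]) simp
  finally show "card Fs \<le> card (UNIV :: 'a set) ^ m" by (simp add: card_vecs)
qed

section \<open>Coset encodings\<close>

definition add_subgroup :: "'v::ab_group_add set \<Rightarrow> bool" where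
  "add_subgroup W \<longleftrightarrow> 0 \<in> W \<and> (\<forall>a\<in>W. \<forall>b\<in>W. a - b \<in> W)"

lemma add_subgroup_zero: "add_subgroup W \<Longrightarrow> 0 \<in> W"
  and add_subgroup_diff: "add_subgroup W \<Longrightarrow> a \<in> W \<Longrightarrow> b \<in> W \<Longrightarrow> a - b \<in> W"
  by (simp_all add: add_subgroup_def)

lemma add_subgroup_add: "add_subgroup W \<Longrightarrow> a \<in> W \<Longrightarrow> b \<in> W \<Longrightarrow> a + b \<in> W"
  using add_subgroup_diff[of W a "0 - b"] add_subgroup_diff[of W 0 b] add_subgroup_zero[of W] by simp

lemma add_subgroup_dual: "add_subgroup (dual UNIV (*) I (V :: ('i \<Rightarrow> 'a::comm_ring) set))"
  unfolding add_subgroup_def dual_def dotp_def vecs_def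
  by (auto simp: left_diff_distrib sum_subtractf)

lemma add_subgroup_dual_fmul: "add_subgroup (dual (polys_lt k) (fmul \<gamma>) I V)"
  unfolding add_subgroup_def dual_def dotp_def vecs_def
  by (auto simp: fmul_diff_left sum_subtractf polys_lt_diff)

lemma is_subspace_add_subgroup:
  "is_subspace UNIV (*) I (V :: ('i \<Rightarrow> 'a::ring_1) set) \<Longrightarrow> add_subgroup V"
  using is_subspace_diff is_subspace_zero unfolding add_subgroup_def by blast

lemma is_subspace_fmul_add_subgroup:
  assumes V: "is_subspace (polys_lt (degree \<gamma>)) (fmul \<gamma>) I V" and "degree \<gamma> > 0"
  shows "add_subgroup V"
proof -
  have "smul (fmul \<gamma>) [:-1:] v = - v" if "v \<in> V" for v
    using smul_fmul_const[OF is_subspace_vecs[OF V that]] by (simp add: fun_eq_iff)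
  then show ?thesis
    using is_subspace_add[OF V] is_subspace_smul[OF V polys_lt_const[OF assms(2)]] is_subspace_zero[OF V]
    unfolding add_subgroup_def by (metis diff_conv_add_uminus)
qed

locale coset_encoding =
  fixes K :: "'s::ab_group_add set" and mul :: "'s \<Rightarrow> 's \<Rightarrow> 's" and W Q :: "('i \<Rightarrow> 's) set"
    and dsm :: "'s \<Rightarrow> 'd::ab_group_add \<Rightarrow> 'd" and Dom :: "'d set" and E :: "'d \<Rightarrow> ('i \<Rightarrow> 's) set"
  assumes is_enc: "is_enc K mul W Q dsm Dom E" and kernel: "add_subgroup W"
    and dom_zero: "0 \<in> Dom" and dom_diff: "x \<in> Dom \<Longrightarrow> y \<in> Dom \<Longrightarrow> x - y \<in> Dom"
begin

lemma value_coset_rep: "x \<in> Dom \<Longrightarrow> \<exists>v\<in>Q. E x = (\<lambda>w. v + w) ` W"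
  and add_mem: "x \<in> Dom \<Longrightarrow> y \<in> Dom \<Longrightarrow> u \<in> E x \<Longrightarrow> v \<in> E y \<Longrightarrow> u + v \<in> E (x + y)"
  and smul_mem: "c \<in> K \<Longrightarrow> x \<in> Dom \<Longrightarrow> u \<in> E x \<Longrightarrow> smul mul c u \<in> E (dsm c x)"
  and inj: "inj_on E Dom"
  and surj: "v \<in> Q \<Longrightarrow> \<exists>x\<in>Dom. v \<in> E x"
  using is_enc unfolding is_enc_def by blast+

lemma value_eq_coset:
  assumes "x \<in> Dom" "u \<in> E x" shows "E x = (\<lambda>w. u + w) ` W"
proof -
  obtain v where v: "E x = (\<lambda>w. v + w) ` W" using value_coset_rep assms(1) by blast
  then obtain w0 where w0: "w0 \<in> W" "u = v + w0" using assms(2) by auto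
  show ?thesis
  proof
    show "E x \<subseteq> (\<lambda>w. u + w) ` W"
    proof
      fix y assume "y \<in> E x"
      then obtain w where "w \<in> W" "y = v + w" using v by auto
      then show "y \<in> (\<lambda>w. u + w) ` W"
        using w0 add_subgroup_diff[OF kernel] by (intro image_eqI[of _ _ "w - w0"]) auto
    qed
    show "(\<lambda>w. u + w) ` W \<subseteq> E x"
      using v w0 add_subgroup_add[OF kernel] by (auto intro!: image_eqI[of _ _ "w0 + _"] simp: add.assoc)
  qed
qed

lemma value_nonempty: "x \<in> Dom \<Longrightarrow> \<exists>u. u \<in> E x"
  using value_coset_rep add_subgroup_zero[OF kernel] by blast

lemma diff_in_kernel: "x \<in> Dom \<Longrightarrow> u \<in> E x \<Longrightarrow> u' \<in> E x \<Longrightarrow> u - u' \<in> W"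
  using value_eq_coset[of x u'] by (auto simp: add.commute)

lemma add_kernel_mem: "x \<in> Dom \<Longrightarrow> u \<in> E x \<Longrightarrow> w \<in> W \<Longrightarrow> u + w \<in> E x"
  using value_eq_coset by blast

lemma value_zero: "E 0 = W"
proof -
  obtain u where u: "u \<in> E 0" using value_nonempty dom_zero by blast
  have "u + u \<in> E 0" using add_mem[OF dom_zero dom_zero u u] by simp
  then have uW: "u \<in> W" using diff_in_kernel[OF dom_zero _ u] by fastforce
  have "(\<lambda>w. u + w) ` W = W"
  proof
    show "(\<lambda>w. u + w) ` W \<subseteq> W" using add_subgroup_add[OF kernel uW] by auto
    show "W \<subseteq> (\<lambda>w. u + w) ` W"
      using add_subgroup_diff[OF kernel _ uW] by (auto intro!: image_eqI[of _ _ "_ - u"])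
  qed
  then show ?thesis using value_eq_coset[OF dom_zero u] by simp
qed

lemma value_unique: "x \<in> Dom \<Longrightarrow> y \<in> Dom \<Longrightarrow> u \<in> E x \<Longrightarrow> u \<in> E y \<Longrightarrow> x = y"
  using value_eq_coset inj_onD[OF inj] by metis

lemma kernel_imp_zero: "x \<in> Dom \<Longrightarrow> u \<in> E x \<Longrightarrow> u \<in> W \<Longrightarrow> x = 0"
  using value_unique[of x 0 u] value_zero dom_zero by blast

lemma diff_mem:
  assumes "x \<in> Dom" "y \<in> Dom" "u \<in> E x" "v \<in> E y" shows "u - v \<in> E (x - y)"
proof -
  have xy: "x - y \<in> Dom" using dom_diff assms by auto
  obtain t where t: "t \<in> E (x - y)" using value_nonempty xy by blast
  have "t + v \<in> E x" using add_mem[OF xy assms(2) t assms(4)] by simp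
  then have "u - (t + v) \<in> W" using diff_in_kernel assms by blast
  then have "t + (u - (t + v)) \<in> E (x - y)" using add_kernel_mem[OF xy t] by blast
  then show ?thesis by (simp add: algebra_simps)
qed

lemma value_subset:
  assumes "W \<subseteq> Q" "add_subgroup Q" "x \<in> Dom" shows "E x \<subseteq> Q"
proof -
  obtain v where "v \<in> Q" "E x = (\<lambda>w. v + w) ` W" using value_coset_rep assms(3) by blast
  then show ?thesis using assms(1) add_subgroup_add[OF assms(2)] by auto
qed

lemma card_codomain:
  assumes "finite Dom" "finite W" "W \<subseteq> Q" "add_subgroup Q" shows "card Q = card Dom * card W"
proof -
  have Q: "Q = (\<Union>x\<in>Dom. E x)" using surj value_subset[OF assms(3,4)] by blast
  have "card (E x) = card W" if x: "x \<in> Dom" for x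
  proof -
    obtain u where "u \<in> E x" using value_nonempty x by blast
    then have "E x = (\<lambda>w. u + w) ` W" using value_eq_coset x by blast
    then show ?thesis by (simp add: card_image inj_on_def)
  qed
  moreover have "finite (E x)" if "x \<in> Dom" for x
    using value_coset_rep[OF that] assms(2) by auto
  moreover have "\<forall>x\<in>Dom. \<forall>y\<in>Dom. x \<noteq> y \<longrightarrow> E x \<inter> E y = {}"
    by (auto dest: value_unique)
  ultimately have "card (\<Union>x\<in>Dom. E x) = (\<Sum>x\<in>Dom. card W)"
    using assms(1) by (simp add: card_UN_disjoint)
  then show ?thesis using Q by simp
qed

end

lemma is_subspace_space_of:
  assumes D: "0 \<in> D" "\<And>x y. x \<in> D \<Longrightarrow> y \<in> D \<Longrightarrow> x + y \<in> D" "\<And>c x. x \<in> D \<Longrightarrow> dsm c x \<in> D"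
    and E: "0 \<in> E 0" "\<And>x. x \<in> D \<Longrightarrow> E x \<subseteq> vecs UNIV I"
      "\<And>x y u v. x \<in> D \<Longrightarrow> y \<in> D \<Longrightarrow> u \<in> E x \<Longrightarrow> v \<in> E y \<Longrightarrow> u + v \<in> E (x + y)"
      "\<And>c x u. x \<in> D \<Longrightarrow> u \<in> E x \<Longrightarrow> smul (*) c u \<in> E (dsm c x)"
  shows "is_subspace UNIV (*) I (space_of D E)"
  unfolding is_subspace_def space_of_def
proof (intro conjI ballI allI subsetI)
  show "0 \<in> (\<Union>x\<in>D. E x)" using D(1) E(1) by blast
  show "v \<in> vecs UNIV I" if "v \<in> (\<Union>x\<in>D. E x)" for v using that E(2) by blast
  fix u v assume "u \<in> (\<Union>x\<in>D. E x)" "v \<in> (\<Union>x\<in>D. E x)"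
  then obtain x y where "x \<in> D" "y \<in> D" "u \<in> E x" "v \<in> E y" by blast
  then show "u + v \<in> (\<Union>x\<in>D. E x)" using D(2)[of x y] E(3)[of x y u v] by blast
next
  fix c v assume "v \<in> (\<Union>x\<in>D. E x)"
  then obtain x where "x \<in> D" "v \<in> E x" by blast
  then show "smul (*) c v \<in> (\<Union>x\<in>D. E x)" using D(3)[of x c] E(4)[of x v c] by blast
qed

section \<open>Inner codes and the trace form\<close>

locale inner_code =
  fixes \<gamma> :: "'a::{finite,field} poly" and n' :: nat and QX QZ :: "(nat \<Rightarrow> 'a) set"
    and EncZ EncX :: "'a poly \<Rightarrow> (nat \<Rightarrow> 'a) set"
  assumes gamma_nonzero: "\<gamma> \<noteq> 0" and degree_pos: "degree \<gamma> > 0"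
    and css: "is_css UNIV (*) {..<n'} QX QZ"
    and encZ: "is_enc UNIV (*) (dual UNIV (*) {..<n'} QX) QZ smult (polys_lt (degree \<gamma>)) EncZ"
    and encX: "is_enc UNIV (*) (dual UNIV (*) {..<n'} QZ) QX smult (polys_lt (degree \<gamma>)) EncX"
    and compat: "compatible (\<lambda>x z. ftrace \<gamma> (fmul \<gamma> x z)) (*) {..<n'} (polys_lt (degree \<gamma>)) EncX EncZ"
begin

abbreviation "P \<equiv> polys_lt (degree \<gamma>)"
abbreviation "tr \<equiv> ftrace \<gamma>"

sublocale Z: coset_encoding UNIV "(*)" "dual UNIV (*) {..<n'} QX" QZ smult P EncZ
  by unfold_locales (auto simp: encZ add_subgroup_dual polys_lt_diff)

sublocale X: coset_encoding UNIV "(*)" "dual UNIV (*) {..<n'} QZ" QX smult P EncX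
  by unfold_locales (auto simp: encX add_subgroup_dual polys_lt_diff)

lemma QX_subspace: "is_subspace UNIV (*) {..<n'} QX"
  and QZ_subspace: "is_subspace UNIV (*) {..<n'} QZ"
  and dual_QX_subset_QZ: "dual UNIV (*) {..<n'} QX \<subseteq> QZ"
  using css by (simp_all add: is_css_def)

lemma dual_QZ_subset_QX: "dual UNIV (*) {..<n'} QZ \<subseteq> QX"
  using dual_antimono[OF dual_QX_subset_QZ] double_dual_subset[OF _ QX_subspace] by blast

lemma encZ_subset: "x \<in> P \<Longrightarrow> EncZ x \<subseteq> QZ"
  using Z.value_subset[OF dual_QX_subset_QZ is_subspace_add_subgroup[OF QZ_subspace]] .

lemma encX_subset: "x \<in> P \<Longrightarrow> EncX x \<subseteq> QX"
  using X.value_subset[OF dual_QZ_subset_QX is_subspace_add_subgroup[OF QX_subspace]] .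

lemma encZ_vecs: "x \<in> P \<Longrightarrow> u \<in> EncZ x \<Longrightarrow> u \<in> vecs UNIV {..<n'}"
  using encZ_subset QZ_subspace is_subspace_vecs by blast

lemma encX_vecs: "x \<in> P \<Longrightarrow> u \<in> EncX x \<Longrightarrow> u \<in> vecs UNIV {..<n'}"
  using encX_subset QX_subspace is_subspace_vecs by blast

lemma tr_fmul_eq_dotp:
  "x \<in> P \<Longrightarrow> z \<in> P \<Longrightarrow> x' \<in> EncX x \<Longrightarrow> z' \<in> EncZ z \<Longrightarrow> tr (fmul \<gamma> x z) = dotp (*) {..<n'} x' z'"
  using compat unfolding compatible_def by blast

lemma one_in_P: "1 \<in> P"
  using polys_lt_const[OF degree_pos, of 1] by (simp add: one_pCons)

text \<open>Linearity of the trace is read off the compatible encodings by pairing against an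
  encoding of \<open>1\<close>; the definition of \<open>ftrace\<close> is never unfolded.\<close>

lemma tr_eq_dotp: "a \<in> P \<Longrightarrow> x' \<in> EncX a \<Longrightarrow> z' \<in> EncZ 1 \<Longrightarrow> tr a = dotp (*) {..<n'} x' z'"
  using tr_fmul_eq_dotp[OF _ one_in_P] fmul_one fmul_commute by metis

lemma tr_add: assumes "a \<in> P" "b \<in> P" shows "tr (a + b) = tr a + tr b"
proof -
  obtain x' y' z' where x': "x' \<in> EncX a" and y': "y' \<in> EncX b" and z': "z' \<in> EncZ 1"
    using X.value_nonempty Z.value_nonempty assms one_in_P by metis
  have "tr (a + b) = dotp (*) {..<n'} (x' + y') z'"
    using tr_eq_dotp[OF polys_lt_add[OF assms] X.add_mem[OF assms x' y'] z'] .
  also have "\<dots> = dotp (*) {..<n'} x' z' + dotp (*) {..<n'} y' z'"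
    unfolding dotp_def by (simp add: distrib_right sum.distrib)
  finally show ?thesis using tr_eq_dotp[OF assms(1) x' z'] tr_eq_dotp[OF assms(2) y' z'] by simp
qed

lemma tr_smult: assumes "a \<in> P" shows "tr (smult c a) = c * tr a"
proof -
  obtain x' z' where x': "x' \<in> EncX a" and z': "z' \<in> EncZ 1"
    using X.value_nonempty Z.value_nonempty assms one_in_P by metis
  have "tr (smult c a) = dotp (*) {..<n'} (smul (*) c x') z'"
    using tr_eq_dotp[OF polys_lt_smult[OF assms] X.smul_mem[OF _ assms x'] z'] by simp
  then show ?thesis using tr_eq_dotp[OF assms x' z'] by (simp add: dotp_smul_left)
qed

lemma linear_on_polys_lt_tr: "linear_on_polys_lt (degree \<gamma>) tr"
  unfolding linear_on_polys_lt_def using tr_add tr_smult by blast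

lemma tr_zero: "tr 0 = 0"
  using linear_on_polys_lt_zero[OF linear_on_polys_lt_tr] .

lemma tr_diff: "a \<in> P \<Longrightarrow> b \<in> P \<Longrightarrow> tr (a - b) = tr a - tr b"
  using tr_add[of "a - b" b] polys_lt_diff[of a _ b] by (simp add: eq_diff_eq)

lemma tr_sum: "(\<And>i. i \<in> S \<Longrightarrow> f i \<in> P) \<Longrightarrow> tr (\<Sum>i\<in>S. f i) = (\<Sum>i\<in>S. tr (f i))"
  using linear_on_polys_lt_sum[OF linear_on_polys_lt_tr] .

lemma tr_nondegenerate:
  assumes "\<beta> \<in> P" "\<forall>c\<in>P. tr (fmul \<gamma> c \<beta>) = 0" shows "\<beta> = 0"
proof -
  obtain z' where z': "z' \<in> EncZ \<beta>" using Z.value_nonempty assms by blast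
  have "dotp (*) {..<n'} z' v = 0" if v: "v \<in> QX" for v
  proof -
    obtain c where c: "c \<in> P" "v \<in> EncX c" using X.surj[OF v] by blast
    show ?thesis using tr_fmul_eq_dotp[OF c(1) assms(1) c(2) z'] assms(2) c(1) by (simp add: dotp_commute)
  qed
  then have "z' \<in> dual UNIV (*) {..<n'} QX"
    using encZ_vecs[OF assms(1) z'] by (simp add: dual_def)
  then show ?thesis using Z.kernel_imp_zero assms z' by blast
qed

text \<open>The map \<open>\<beta> \<mapsto> tr (\<beta> \<cdot> _)\<close> is injective by nondegeneracy, and there are at
  most \<open>q\<^sup>k\<^sup>'\<close> linear functionals, so it is onto.\<close>

lemma tr_represents_functional:
  assumes L: "linear_on_polys_lt (degree \<gamma>) L"
  shows "\<exists>\<beta>\<in>P. \<forall>p\<in>P. L p = tr (fmul \<gamma> \<beta> p)"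
proof -
  define Fs where "Fs = {f :: 'a poly \<Rightarrow> 'a. linear_on_polys_lt (degree \<gamma>) f \<and> (\<forall>x. x \<notin> P \<longrightarrow> f x = 0)}"
  define \<Phi> where "\<Phi> \<beta> = (\<lambda>p. if p \<in> P then tr (fmul \<gamma> \<beta> p) else 0)" for \<beta>
  have "\<Phi> \<beta> \<in> Fs" for \<beta>
    unfolding Fs_def \<Phi>_def linear_on_polys_lt_def
    by (simp add: polys_lt_add polys_lt_smult fmul_add_right fmul_smult_right tr_add tr_smult
        fmul_in_polys_lt[OF gamma_nonzero])
  then have \<Phi>_Fs: "\<Phi> ` P \<subseteq> Fs" by blast
  have "inj_on \<Phi> P"
  proof (rule inj_onI)
    fix b1 b2 assume b: "b1 \<in> P" "b2 \<in> P" "\<Phi> b1 = \<Phi> b2"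
    have "\<forall>c\<in>P. tr (fmul \<gamma> c (b1 - b2)) = 0"
    proof
      fix c :: "'a poly" assume c: "c \<in> P"
      have "tr (fmul \<gamma> b1 c) = tr (fmul \<gamma> b2 c)" using fun_cong[OF b(3), of c] c by (simp add: \<Phi>_def)
      then show "tr (fmul \<gamma> c (b1 - b2)) = 0"
        by (simp add: fmul_commute[of \<gamma> c] fmul_diff_left tr_diff fmul_in_polys_lt[OF gamma_nonzero])
    qed
    then have "b1 - b2 = 0" by (rule tr_nondegenerate[OF polys_lt_diff[OF b(1,2)]])
    then show "b1 = b2" by simp
  qed
  then have "card (\<Phi> ` P) = card (UNIV :: 'a set) ^ degree \<gamma>"
    by (simp add: card_image card_polys_lt)
  moreover have "finite Fs" "card Fs \<le> card (UNIV :: 'a set) ^ degree \<gamma>"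
    unfolding Fs_def by (rule finite_card_linear_functionals)+
  ultimately have "\<Phi> ` P = Fs" using \<Phi>_Fs by (intro card_seteq) simp_all
  moreover have "(\<lambda>p. if p \<in> P then L p else 0) \<in> Fs"
    using L unfolding Fs_def linear_on_polys_lt_def by (simp add: polys_lt_add polys_lt_smult)
  ultimately have "(\<lambda>p. if p \<in> P then L p else 0) \<in> \<Phi> ` P" by simp
  then obtain \<beta> where \<beta>: "(\<lambda>p. if p \<in> P then L p else 0) = \<Phi> \<beta>" "\<beta> \<in> P"
    by (rule imageE)
  have "L p = tr (fmul \<gamma> \<beta> p)" if "p \<in> P" for p
    using fun_cong[OF \<beta>(1), of p] that by (simp add: \<Phi>_def)
  then show ?thesis using \<beta>(2) by blast
qed

end

section \<open>Concatenation\<close>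

definition blk :: "(nat \<times> nat \<Rightarrow> 'a) \<Rightarrow> nat \<Rightarrow> (nat \<Rightarrow> 'a)" where
  "blk w j = (\<lambda>i. w (j, i))"

definition concat_blocks :: "nat \<Rightarrow> nat \<Rightarrow> ('a::zero poly \<Rightarrow> (nat \<Rightarrow> 'a) set) \<Rightarrow> (nat \<Rightarrow> 'a poly)
    \<Rightarrow> (nat \<times> nat \<Rightarrow> 'a) set" where
  "concat_blocks n n' E y = {w \<in> vecs UNIV ({..<n} \<times> {..<n'}). \<forall>j<n. blk w j \<in> E (y j)}"

lemma concat_enc_eq_Union: "concat_enc n n' Ei Eo x = (\<Union>y\<in>Eo x. concat_blocks n n' Ei y)"
  by (simp add: concat_enc_def concat_blocks_def blk_def)

lemma dotp_blocks: "dotp (*) ({..<n} \<times> {..<n'}) a b = (\<Sum>j<n. dotp (*) {..<n'} (blk a j) (blk b j))"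
  unfolding dotp_def blk_def by (simp add: sum.cartesian_product)

lemma wt_blocks: "wt ({..<n} \<times> {..<n'}) w = (\<Sum>j<n. wt {..<n'} (blk w j))"
proof -
  have "{p \<in> {..<n} \<times> {..<n'}. w p \<noteq> 0} = Sigma {..<n} (\<lambda>j. {i \<in> {..<n'}. w (j, i) \<noteq> 0})" by auto
  then show ?thesis unfolding wt_def blk_def by (simp add: card_SigmaI)
qed

lemma blk_vecs: "w \<in> vecs K ({..<n} \<times> {..<n'}) \<Longrightarrow> j < n \<Longrightarrow> 0 \<in> K \<Longrightarrow> blk w j \<in> vecs K {..<n'}"
  by (auto simp: vecs_def blk_def)

locale block_concat = coset_encoding UNIV "(*)" W Q smult "polys_lt (degree \<gamma>)" E
  for W Q :: "(nat \<Rightarrow> 'a::{finite,field}) set" and \<gamma> :: "'a poly" and E +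
  fixes n n' :: nat
  assumes value_vecs: "x \<in> polys_lt (degree \<gamma>) \<Longrightarrow> u \<in> E x \<Longrightarrow> u \<in> vecs UNIV {..<n'}"
    and gamma_nonzero: "\<gamma> \<noteq> 0" and degree_pos: "degree \<gamma> > 0"
begin

abbreviation "C \<equiv> concat_blocks n n' E"

lemma concat_blocks_vecs: "w \<in> C y \<Longrightarrow> w \<in> vecs UNIV ({..<n} \<times> {..<n'})"
  by (simp add: concat_blocks_def)

lemma concat_blocks_of_blocks:
  assumes "w \<in> vecs UNIV ({..<n} \<times> {..<n'})" "\<forall>j<n. blk w j \<in> Q"
  shows "\<exists>y\<in>vecs (polys_lt (degree \<gamma>)) {..<n}. w \<in> C y"
proof -
  define y where "y j = (if j < n then (SOME x. x \<in> polys_lt (degree \<gamma>) \<and> blk w j \<in> E x) else 0)" for j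
  have "y j \<in> polys_lt (degree \<gamma>) \<and> blk w j \<in> E (y j)" if j: "j < n" for j
  proof -
    have "\<exists>x. x \<in> polys_lt (degree \<gamma>) \<and> blk w j \<in> E x" using surj assms(2) j by blast
    from someI_ex[OF this] show ?thesis using j by (simp add: y_def)
  qed
  then show ?thesis using assms(1) by (intro bexI[of _ y]) (auto simp: concat_blocks_def vecs_def y_def)
qed

lemma concat_blocks_nonempty: assumes "y \<in> vecs (polys_lt (degree \<gamma>)) {..<n}" shows "\<exists>w. w \<in> C y"
proof -
  define b where "b j = (SOME u. u \<in> E (y j))" for j
  have b: "b j \<in> E (y j)" for j
    unfolding b_def using value_nonempty vecs_polys_lt_component[OF assms] by (metis someI_ex)
  define w where "w = (\<lambda>(j, i). if j < n \<and> i < n' then b j i else 0)"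
  have "blk w j = b j" if "j < n" for j
    using that value_vecs[OF vecs_polys_lt_component[OF assms] b[of j]]
    by (auto simp: blk_def w_def vecs_def fun_eq_iff)
  then have "w \<in> C y" using b by (auto simp: concat_blocks_def vecs_def w_def)
  then show ?thesis by blast
qed

context
  fixes y y' w w'
  assumes y: "y \<in> vecs (polys_lt (degree \<gamma>)) {..<n}" "y' \<in> vecs (polys_lt (degree \<gamma>)) {..<n}"
    and w: "w \<in> C y" "w' \<in> C y'"
begin

lemma concat_blocks_add: "w + w' \<in> C (y + y')"
proof -
  have "blk (w + w') j \<in> E ((y + y') j)" if "j < n" for j
  proof -
    have "blk w j \<in> E (y j)" "blk w' j \<in> E (y' j)" using w that by (auto simp: concat_blocks_def)
    from add_mem[OF vecs_polys_lt_component[OF y(1)] vecs_polys_lt_component[OF y(2)] this]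
    show ?thesis by (simp add: blk_def plus_fun_def)
  qed
  then show ?thesis using w by (auto simp: concat_blocks_def vecs_def)
qed

lemma concat_blocks_diff: "w - w' \<in> C (y - y')"
proof -
  have "blk (w - w') j \<in> E ((y - y') j)" if "j < n" for j
  proof -
    have "blk w j \<in> E (y j)" "blk w' j \<in> E (y' j)" using w that by (auto simp: concat_blocks_def)
    from diff_mem[OF vecs_polys_lt_component[OF y(1)] vecs_polys_lt_component[OF y(2)] this]
    show ?thesis by (simp add: blk_def fun_diff_def)
  qed
  then show ?thesis using w by (auto simp: concat_blocks_def vecs_def)
qed

lemma concat_blocks_inj: assumes "w = w'" shows "y = y'"
proof
  fix j show "y j = y' j"
  proof (cases "j < n")
    case True
    then show ?thesis
      using value_unique[OF vecs_polys_lt_component[OF y(1)] vecs_polys_lt_component[OF y(2)], of "blk w j"] w assms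
      by (auto simp: concat_blocks_def)
  qed (use y in \<open>auto simp: vecs_def\<close>)
qed

end

lemma concat_blocks_smul:
  assumes "y \<in> vecs (polys_lt (degree \<gamma>)) {..<n}" "w \<in> C y"
  shows "smul (*) c w \<in> C (smul (fmul \<gamma>) [:c:] y)"
  using assms smul_mem[OF _ vecs_polys_lt_component[OF assms(1)]] unfolding smul_fmul_const[OF assms(1)]
  by (auto simp: concat_blocks_def vecs_def smul_def blk_def)

lemma concat_blocks_zero: "0 \<in> C 0"
  using value_zero add_subgroup_zero[OF kernel] by (auto simp: concat_blocks_def vecs_def blk_def zero_fun_def)

end

context inner_code
begin

sublocale CZ: block_concat "dual UNIV (*) {..<n'} QX" QZ \<gamma> EncZ n n' for n
  by unfold_locales (auto simp: encZ_vecs gamma_nonzero degree_pos)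

sublocale CX: block_concat "dual UNIV (*) {..<n'} QZ" QX \<gamma> EncX n n' for n
  by unfold_locales (auto simp: encX_vecs gamma_nonzero degree_pos)

lemma dotp_concat_blocks:
  assumes "x' \<in> vecs P {..<n}" "z' \<in> vecs P {..<n}"
    "xt \<in> concat_blocks n n' EncX x'" "zt \<in> concat_blocks n n' EncZ z'"
  shows "dotp (*) ({..<n} \<times> {..<n'}) xt zt = tr (dotp (fmul \<gamma>) {..<n} x' z')"
proof -
  have "dotp (*) ({..<n} \<times> {..<n'}) xt zt = (\<Sum>j<n. dotp (*) {..<n'} (blk xt j) (blk zt j))"
    by (rule dotp_blocks)
  also have "\<dots> = (\<Sum>j<n. tr (fmul \<gamma> (x' j) (z' j)))"
  proof (rule sum.cong)
    fix j assume "j \<in> {..<n}"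
    then have "blk xt j \<in> EncX (x' j)" "blk zt j \<in> EncZ (z' j)"
      using assms(3,4) by (auto simp: concat_blocks_def)
    then show "dotp (*) {..<n'} (blk xt j) (blk zt j) = tr (fmul \<gamma> (x' j) (z' j))"
      using tr_fmul_eq_dotp[OF vecs_polys_lt_component[OF assms(1)] vecs_polys_lt_component[OF assms(2)]] by simp
  qed simp
  also have "\<dots> = tr (dotp (fmul \<gamma>) {..<n} x' z')"
    unfolding dotp_def using fmul_in_polys_lt[OF gamma_nonzero] by (intro tr_sum[symmetric])
  finally show ?thesis .
qed

lemma dual_concat_blocks_in_QZ:
  assumes Y0: "0 \<in> Y"
    and u: "u \<in> dual UNIV (*) ({..<n} \<times> {..<n'}) (\<Union>y\<in>Y. concat_blocks n n' EncX y)" and j: "j < n"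
  shows "blk u j \<in> QZ"
proof -
  have "blk u j \<in> dual UNIV (*) {..<n'} (dual UNIV (*) {..<n'} QZ)"
  proof (unfold dual_def, intro CollectI conjI ballI)
    show "blk u j \<in> vecs UNIV {..<n'}" using u j by (auto simp: dual_def intro: blk_vecs)
    fix w assume w: "w \<in> {w \<in> vecs UNIV {..<n'}. \<forall>v\<in>QZ. dotp (*) {..<n'} w v = 0}"
    \<comment> \<open>\<open>w\<close>, placed in block \<open>j\<close>, is a concatenated encoding of the outer zero word\<close>
    define xt where "xt = (\<lambda>(j', i). if j' = j \<and> i < n' then w i else (0::'a))"
    have bx: "blk xt j' = (if j' = j then w else 0)" for j'
      using w by (auto simp: blk_def xt_def fun_eq_iff vecs_def)
    have "w \<in> EncX 0" "0 \<in> EncX 0" using w X.value_zero add_subgroup_zero[OF add_subgroup_dual]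
      by (auto simp: dual_def)
    moreover have "xt \<in> vecs UNIV ({..<n} \<times> {..<n'})" using j by (auto simp: vecs_def xt_def)
    ultimately have "xt \<in> concat_blocks n n' EncX 0" by (auto simp: concat_blocks_def bx)
    then have "dotp (*) ({..<n} \<times> {..<n'}) u xt = 0" using u Y0 by (auto simp: dual_def)
    moreover have "dotp (*) {..<n'} (blk u j') (blk xt j') = (if j' = j then dotp (*) {..<n'} (blk u j) w else 0)"
      for j' by (simp add: bx dotp_def)
    ultimately show "dotp (*) {..<n'} (blk u j) w = 0"
      using j by (simp add: dotp_blocks)
  qed
  then show ?thesis using double_dual_subset[OF _ QZ_subspace] by blast
qed

lemma outer_orthogonal_if_concat_orthogonal:
  assumes x': "x' \<in> vecs P {..<n}" and y': "y' \<in> vecs P {..<n}" and u: "u \<in> concat_blocks n n' EncZ y'"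
    and orth: "\<And>c xt. c \<in> P \<Longrightarrow> xt \<in> concat_blocks n n' EncX (smul (fmul \<gamma>) c x')
       \<Longrightarrow> dotp (*) ({..<n} \<times> {..<n'}) xt u = 0"
  shows "dotp (fmul \<gamma>) {..<n} x' y' = 0"
proof -
  define S where "S = dotp (fmul \<gamma>) {..<n} x' y'"
  have "tr (fmul \<gamma> c S) = 0" if c: "c \<in> P" for c
  proof -
    have cx: "smul (fmul \<gamma>) c x' \<in> vecs P {..<n}"
      using x' fmul_in_polys_lt[OF gamma_nonzero] by (auto simp: vecs_def smul_def)
    obtain xt where xt: "xt \<in> concat_blocks n n' EncX (smul (fmul \<gamma>) c x')"
      using CX.concat_blocks_nonempty[OF cx] by blast
    have "dotp (fmul \<gamma>) {..<n} (smul (fmul \<gamma>) c x') y' = fmul \<gamma> c S"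
      unfolding S_def dotp_def smul_def by (simp add: fmul_sum_right fmul_assoc)
    then show ?thesis using dotp_concat_blocks[OF cx y' xt u] orth[OF c xt] by simp
  qed
  moreover have "S \<in> P" unfolding S_def dotp_def by (intro polys_lt_sum fmul_in_polys_lt[OF gamma_nonzero])
  ultimately show ?thesis using tr_nondegenerate unfolding S_def by blast
qed

lemma dual_concat_space:
  assumes Y: "Y \<subseteq> vecs P {..<n}" "0 \<in> Y" "\<And>c y. c \<in> P \<Longrightarrow> y \<in> Y \<Longrightarrow> smul (fmul \<gamma>) c y \<in> Y"
    and u: "u \<in> dual UNIV (*) ({..<n} \<times> {..<n'}) (\<Union>y\<in>Y. concat_blocks n n' EncX y)"
  shows "\<exists>y'\<in>dual P (fmul \<gamma>) {..<n} Y. u \<in> concat_blocks n n' EncZ y'"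
proof -
  have "u \<in> vecs UNIV ({..<n} \<times> {..<n'})" using u by (simp add: dual_def)
  then obtain y' where y': "y' \<in> vecs P {..<n}" "u \<in> concat_blocks n n' EncZ y'"
    using CZ.concat_blocks_of_blocks dual_concat_blocks_in_QZ[OF Y(2) u] by blast
  have "dotp (fmul \<gamma>) {..<n} y' x' = 0" if x': "x' \<in> Y" for x'
  proof -
    have "dotp (*) ({..<n} \<times> {..<n'}) xt u = 0"
      if "c \<in> P" "xt \<in> concat_blocks n n' EncX (smul (fmul \<gamma>) c x')" for c xt
      using u Y(3)[OF that(1) x'] that(2) by (subst dotp_commute) (auto simp: dual_def)
    then have "dotp (fmul \<gamma>) {..<n} x' y' = 0"
      using outer_orthogonal_if_concat_orthogonal Y(1) x' y' by blast
    then show ?thesis by (simp add: dotp_def fmul_commute)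
  qed
  then show ?thesis using y' by (auto simp: dual_def)
qed

lemma is_subspace_concat_space:
  fixes n :: nat
  assumes Y: "is_subspace P (fmul \<gamma>) {..<n} Y"
  shows "is_subspace UNIV (*) ({..<n} \<times> {..<n'}) (space_of Y (concat_blocks n n' EncX))"
proof (rule is_subspace_space_of[where dsm="\<lambda>c. smul (fmul \<gamma>) [:c:]"])
  have Yv: "Y \<subseteq> vecs P {..<n}" using Y by (auto simp: is_subspace_def)
  show "x + y \<in> Y" "smul (fmul \<gamma>) [:c:] x \<in> Y" if "x \<in> Y" "y \<in> Y" for x y c
    using that is_subspace_add[OF Y] is_subspace_smul[OF Y polys_lt_const[OF degree_pos]] by blast+
  show "u + v \<in> concat_blocks n n' EncX (x + y)"
    if "x \<in> Y" "y \<in> Y" "u \<in> concat_blocks n n' EncX x" "v \<in> concat_blocks n n' EncX y" for x y u v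
    using that Yv CX.concat_blocks_add by blast
  show "smul (*) c u \<in> concat_blocks n n' EncX (smul (fmul \<gamma>) [:c:] x)"
    if "x \<in> Y" "u \<in> concat_blocks n n' EncX x" for x u c
    using that Yv CX.concat_blocks_smul by blast
qed (use is_subspace_zero[OF Y] CX.concat_blocks_zero CX.concat_blocks_vecs in auto)

lemma outer_dual_QZ_subset_QX:
  fixes n :: nat
  assumes QXo: "is_subspace P (fmul \<gamma>) {..<n} QXo" and QZo: "is_subspace P (fmul \<gamma>) {..<n} QZo"
    and dual_QXo: "dual P (fmul \<gamma>) {..<n} QXo \<subseteq> QZo"
  shows "dual P (fmul \<gamma>) {..<n} QZo \<subseteq> QXo"
proof
  fix w assume w: "w \<in> dual P (fmul \<gamma>) {..<n} QZo"
  have wv: "w \<in> vecs P {..<n}" using w by (auto simp: dual_def)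
  have QXv: "QXo \<subseteq> vecs P {..<n}" using QXo by (auto simp: is_subspace_def)
  let ?V = "space_of QXo (concat_blocks n n' EncX)"
  obtain xt where xt: "xt \<in> concat_blocks n n' EncX w" using CX.concat_blocks_nonempty[OF wv] by blast
  \<comment> \<open>\<open>xt\<close> is orthogonal to the dual of \<open>?V\<close>, hence lies in \<open>?V\<close> by double duality\<close>
  have "xt \<in> dual UNIV (*) ({..<n} \<times> {..<n'}) (dual UNIV (*) ({..<n} \<times> {..<n'}) ?V)"
  proof (unfold dual_def, intro CollectI conjI ballI)
    show "xt \<in> vecs UNIV ({..<n} \<times> {..<n'})" using CX.concat_blocks_vecs xt by blast
    fix v assume "v \<in> {v \<in> vecs UNIV ({..<n} \<times> {..<n'}). \<forall>x\<in>?V. dotp (*) ({..<n} \<times> {..<n'}) v x = 0}"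
    then have "v \<in> dual UNIV (*) ({..<n} \<times> {..<n'}) (\<Union>y\<in>QXo. concat_blocks n n' EncX y)"
      by (simp add: dual_def space_of_def)
    then obtain y' where y': "y' \<in> dual P (fmul \<gamma>) {..<n} QXo" "v \<in> concat_blocks n n' EncZ y'"
      using dual_concat_space[OF QXv is_subspace_zero[OF QXo] is_subspace_smul[OF QXo]] by blast
    have "dotp (fmul \<gamma>) {..<n} w y' = 0" using w y'(1) dual_QXo by (auto simp: dual_def)
    moreover have "y' \<in> vecs P {..<n}" using y'(1) by (simp add: dual_def)
    ultimately show "dotp (*) ({..<n} \<times> {..<n'}) xt v = 0"
      using dotp_concat_blocks[OF wv _ xt y'(2)] tr_zero by simp
  qed
  then obtain y where "y \<in> QXo" "xt \<in> concat_blocks n n' EncX y"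
    using double_dual_subset[OF _ is_subspace_concat_space[OF QXo]] by (auto simp: space_of_def)
  then show "w \<in> QXo" using CX.concat_blocks_inj[OF wv _ xt] QXv by blast
qed

end

section \<open>Interpolation and concatenated encodings\<close>

context
  fixes A :: "'a::{finite,field} set" and k r :: nat
  assumes card_A: "card A = r"
begin

lemma ev_inv_nonempty:
  assumes "z \<in> vecs UNIV ({..<k} \<times> A)" shows "\<exists>s. s \<in> ev_inv k r A z"
proof -
  have "\<exists>p. p \<in> polys_lt r \<and> (\<forall>a\<in>A. poly p a = z (j, a))" if "j < k" for j
    using interpolation_exists[OF card_A, of "\<lambda>a. z (j, a)"] assms that by (auto simp: vecs_def)
  then have "\<forall>j. \<exists>p. j < k \<longrightarrow> p \<in> polys_lt r \<and> (\<forall>a\<in>A. poly p a = z (j, a))" by blast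
  then obtain s where s: "\<And>j. j < k \<Longrightarrow> s j \<in> polys_lt r \<and> (\<forall>a\<in>A. poly (s j) a = z (j, a))"
    by metis
  then have "(\<lambda>j. if j < k then s j else 0) \<in> ev_inv k r A z" by (auto simp: ev_inv_def vecs_def)
  then show ?thesis by blast
qed

lemma ev_inv_unique:
  assumes "s \<in> ev_inv k r A z" "s' \<in> ev_inv k r A z" shows "s = s'"
proof
  fix j show "s j = s' j"
  proof (cases "j < k")
    case True
    then show ?thesis using assms poly_eq_if_agree_on_card[OF finite card_A, of "s j" "s' j"]
      by (auto simp: ev_inv_def vecs_def)
  qed (use assms in \<open>auto simp: ev_inv_def vecs_def\<close>)
qed

end

lemma ev_inv_vecs: "s \<in> ev_inv k r A z \<Longrightarrow> s \<in> vecs (polys_lt r) {..<k}"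
  by (simp add: ev_inv_def)

lemma ev_inv_add: "s \<in> ev_inv k r A z \<Longrightarrow> s' \<in> ev_inv k r A z' \<Longrightarrow> s + s' \<in> ev_inv k r A (z + z')"
  for A :: "'a::field set"
  by (auto simp: ev_inv_def vecs_def intro: polys_lt_add)

lemma ev_inv_smul:
  fixes A :: "'a::field set"
  assumes "s \<in> ev_inv k r A z" "r \<le> degree \<gamma>"
  shows "smul (fmul \<gamma>) [:c:] s \<in> ev_inv k r A (smul (*) c z)"
proof -
  have s: "s \<in> vecs (polys_lt (degree \<gamma>)) {..<k}"
    using assms by (auto simp: ev_inv_def vecs_def intro: polys_lt_mono)
  show ?thesis
    using assms(1) unfolding smul_fmul_const[OF s] by (auto simp: ev_inv_def vecs_def smul_def intro: polys_lt_smult)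
qed

lemma ev_inv_inj:
  assumes "s \<in> ev_inv k r A z" "s \<in> ev_inv k r A z'" "z \<in> vecs UNIV ({..<k} \<times> A)" "z' \<in> vecs UNIV ({..<k} \<times> A)"
  shows "z = z'"
proof
  fix p :: "nat \<times> 'a"
  show "z p = z' p"
  proof (cases "fst p < k \<and> snd p \<in> A")
    case True
    then show ?thesis using assms(1,2) by (cases p) (auto simp: ev_inv_def)
  next
    case False
    then show ?thesis using assms(3,4) by (cases p) (auto simp: vecs_def)
  qed
qed

lemma ev_inv_of_vecs:
  "s \<in> vecs (polys_lt r) {..<k} \<Longrightarrow> \<exists>z\<in>vecs UNIV ({..<k} \<times> A). s \<in> ev_inv k r A z"
  by (intro bexI[of _ "\<lambda>(j, a). if j < k \<and> a \<in> A then poly (s j) a else 0"])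
    (auto simp: ev_inv_def vecs_def)

locale concat_code = block_concat W Q \<gamma> E n n'
  + O: coset_encoding "polys_lt (degree \<gamma>)" "fmul \<gamma>" Wo Qo "smul (fmul \<gamma>)" "vecs (polys_lt (degree \<gamma>)) {..<k}" Eo
  for W Q and \<gamma> :: "'a::{finite,field} poly" and E n n' Wo Qo Eo k +
  assumes outer_value_vecs:
    "x \<in> vecs (polys_lt (degree \<gamma>)) {..<k} \<Longrightarrow> y \<in> Eo x \<Longrightarrow> y \<in> vecs (polys_lt (degree \<gamma>)) {..<n}"
begin

abbreviation "D \<equiv> vecs (polys_lt (degree \<gamma>)) {..<k}"
abbreviation "CE \<equiv> concat_enc n n' E Eo"

lemma concat_enc_mem: "u \<in> CE x \<longleftrightarrow> (\<exists>y\<in>Eo x. u \<in> C y)"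
  by (simp add: concat_enc_eq_Union)

lemma concat_enc_vecs: "u \<in> CE x \<Longrightarrow> u \<in> vecs UNIV ({..<n} \<times> {..<n'})"
  using concat_enc_mem concat_blocks_vecs by blast

lemma concat_enc_nonempty: assumes "x \<in> D" shows "\<exists>u. u \<in> CE x"
proof -
  obtain y where y: "y \<in> Eo x" using O.value_nonempty assms by blast
  obtain u where "u \<in> C y" using concat_blocks_nonempty outer_value_vecs[OF assms y] by blast
  then show ?thesis using y concat_enc_mem by blast
qed

context
  fixes x x' u v
  assumes x: "x \<in> D" "x' \<in> D" and uv: "u \<in> CE x" "v \<in> CE x'"
begin

lemma concat_enc_add: "u + v \<in> CE (x + x')"
proof -
  obtain y y' where y: "y \<in> Eo x" "u \<in> C y" "y' \<in> Eo x'" "v \<in> C y'" using uv concat_enc_mem by blast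
  have "y + y' \<in> Eo (x + x')" using O.add_mem x y by blast
  moreover have "u + v \<in> C (y + y')" using concat_blocks_add outer_value_vecs x y by blast
  ultimately show ?thesis using concat_enc_mem by blast
qed

lemma concat_enc_diff: "u - v \<in> CE (x - x')"
proof -
  obtain y y' where y: "y \<in> Eo x" "u \<in> C y" "y' \<in> Eo x'" "v \<in> C y'" using uv concat_enc_mem by blast
  have "y - y' \<in> Eo (x - x')" using O.diff_mem x y by blast
  moreover have "u - v \<in> C (y - y')" using concat_blocks_diff outer_value_vecs x y by blast
  ultimately show ?thesis using concat_enc_mem by blast
qed

lemma concat_enc_inj: assumes "u = v" shows "x = x'"
proof -
  obtain y y' where y: "y \<in> Eo x" "u \<in> C y" "y' \<in> Eo x'" "v \<in> C y'" using uv concat_enc_mem by blast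
  have "y = y'" using concat_blocks_inj outer_value_vecs x y assms by blast
  then show ?thesis using O.value_unique x y by blast
qed

end

lemma concat_enc_smul:
  assumes "x \<in> D" "u \<in> CE x" shows "smul (*) c u \<in> CE (smul (fmul \<gamma>) [:c:] x)"
proof -
  obtain y where y: "y \<in> Eo x" "u \<in> C y" using assms concat_enc_mem by blast
  have "smul (fmul \<gamma>) [:c:] y \<in> Eo (smul (fmul \<gamma>) [:c:] x)"
    using O.smul_mem[OF polys_lt_const[OF degree_pos]] assms y by blast
  moreover have "smul (*) c u \<in> C (smul (fmul \<gamma>) [:c:] y)"
    using concat_blocks_smul outer_value_vecs assms y by blast
  ultimately show ?thesis using concat_enc_mem by blast
qed

lemma concat_enc_zero: "0 \<in> CE 0"
  using O.value_zero add_subgroup_zero[OF O.kernel] concat_blocks_zero concat_enc_mem by blast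

lemma concat_enc_coset: assumes "x \<in> D" "u \<in> CE x" shows "CE x = (\<lambda>v. u + v) ` CE 0"
proof
  have D0: "0 \<in> D" by (simp add: vecs_def)
  show "(\<lambda>v. u + v) ` CE 0 \<subseteq> CE x"
  proof
    fix w assume "w \<in> (\<lambda>v. u + v) ` CE 0"
    then obtain v where "v \<in> CE 0" "w = u + v" by blast
    then show "w \<in> CE x" using concat_enc_add[OF assms(1) D0 assms(2)] by simp
  qed
  show "CE x \<subseteq> (\<lambda>v. u + v) ` CE 0"
  proof
    fix w assume "w \<in> CE x"
    then have "w - u \<in> CE 0" using concat_enc_diff[OF assms(1) assms(1) _ assms(2)] by simp
    then show "w \<in> (\<lambda>v. u + v) ` CE 0" by (intro image_eqI[of _ _ "w - u"]) auto
  qed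
qed

end

section \<open>The restricted concatenated code\<close>

lemma css_dist_imp_dist_ge: "css_dist K mul I QX QZ d \<Longrightarrow> css_dist_ge K mul I QX QZ d"
  by (simp add: css_dist_def css_dist_ge_def)

lemma wt_concat_ge:
  fixes y :: "nat \<times> nat \<Rightarrow> 'a::zero" and y' :: "nat \<Rightarrow> 'b::zero"
  assumes "\<And>j. j < n \<Longrightarrow> y' j \<noteq> 0 \<Longrightarrow> d_in \<le> wt {..<n'} (blk y j)" "d_out \<le> wt {..<n} y'"
  shows "d_in * d_out \<le> wt ({..<n} \<times> {..<n'}) y"
proof -
  define S where "S = {j \<in> {..<n}. y' j \<noteq> 0}"
  have "d_in * d_out \<le> (\<Sum>j\<in>S. d_in)" using assms(2) by (simp add: wt_def S_def)
  also have "\<dots> \<le> (\<Sum>j\<in>S. wt {..<n'} (blk y j))" using assms(1) by (intro sum_mono) (auto simp: S_def)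
  also have "\<dots> \<le> (\<Sum>j<n. wt {..<n'} (blk y j))" by (intro sum_mono2) (auto simp: S_def)
  finally show ?thesis by (simp add: wt_blocks)
qed

locale restricted_concat = inner_code \<gamma> n' QX QZ EncZ EncX
  for \<gamma> :: "'a::{finite,field} poly" and n' QX QZ EncZ EncX +
  fixes n k r :: nat and A :: "'a set" and QXo QZo :: "(nat \<Rightarrow> 'a poly) set"
    and EZo EXo :: "(nat \<Rightarrow> 'a poly) \<Rightarrow> (nat \<Rightarrow> 'a poly) set" and d_in d_out :: nat
  assumes outer_css: "is_css (polys_lt (degree \<gamma>)) (fmul \<gamma>) {..<n} QXo QZo"
    and encZo: "is_enc (polys_lt (degree \<gamma>)) (fmul \<gamma>) (dual (polys_lt (degree \<gamma>)) (fmul \<gamma>) {..<n} QXo) QZo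
             (smul (fmul \<gamma>)) (vecs (polys_lt (degree \<gamma>)) {..<k}) EZo"
    and encXo: "is_enc (polys_lt (degree \<gamma>)) (fmul \<gamma>) (dual (polys_lt (degree \<gamma>)) (fmul \<gamma>) {..<n} QZo) QXo
             (smul (fmul \<gamma>)) (vecs (polys_lt (degree \<gamma>)) {..<k}) EXo"
    and outer_compat: "compatible (dotp (fmul \<gamma>) {..<k}) (fmul \<gamma>) {..<n} (vecs (polys_lt (degree \<gamma>)) {..<k}) EXo EZo"
    and inner_dist: "css_dist_ge UNIV (*) {..<n'} QX QZ d_in"
    and outer_dist: "css_dist_ge (polys_lt (degree \<gamma>)) (fmul \<gamma>) {..<n} QXo QZo d_out"
    and r_le: "r \<le> degree \<gamma>" and card_A: "card A = r"
begin

lemma QXo_subspace: "is_subspace P (fmul \<gamma>) {..<n} QXo"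
  and QZo_subspace: "is_subspace P (fmul \<gamma>) {..<n} QZo"
  and dual_QXo_subset_QZo: "dual P (fmul \<gamma>) {..<n} QXo \<subseteq> QZo"
  using outer_css by (simp_all add: is_css_def)

lemma dual_QZo_subset_QXo: "dual P (fmul \<gamma>) {..<n} QZo \<subseteq> QXo"
  using outer_dual_QZ_subset_QX[OF QXo_subspace QZo_subspace dual_QXo_subset_QZo] .

sublocale OZ: coset_encoding P "fmul \<gamma>" "dual P (fmul \<gamma>) {..<n} QXo" QZo "smul (fmul \<gamma>)" "vecs P {..<k}" EZo
  by unfold_locales (auto simp: encZo add_subgroup_dual_fmul vecs_polys_lt_diff, simp add: vecs_def)

sublocale OX: coset_encoding P "fmul \<gamma>" "dual P (fmul \<gamma>) {..<n} QZo" QXo "smul (fmul \<gamma>)" "vecs P {..<k}" EXo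
  by unfold_locales (auto simp: encXo add_subgroup_dual_fmul vecs_polys_lt_diff, simp add: vecs_def)

lemma EZo_subset: "x \<in> vecs P {..<k} \<Longrightarrow> EZo x \<subseteq> QZo"
  using OZ.value_subset[OF dual_QXo_subset_QZo is_subspace_fmul_add_subgroup[OF QZo_subspace degree_pos]] .

lemma EXo_subset: "x \<in> vecs P {..<k} \<Longrightarrow> EXo x \<subseteq> QXo"
  using OX.value_subset[OF dual_QZo_subset_QXo is_subspace_fmul_add_subgroup[OF QXo_subspace degree_pos]] .

sublocale ZC: concat_code "dual UNIV (*) {..<n'} QX" QZ \<gamma> EncZ n n' "dual P (fmul \<gamma>) {..<n} QXo" QZo EZo k
  using CZ.block_concat_axioms OZ.coset_encoding_axioms EZo_subset QZo_subspace is_subspace_vecs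
  unfolding concat_code_def concat_code_axioms_def by blast

sublocale XC: concat_code "dual UNIV (*) {..<n'} QZ" QX \<gamma> EncX n n' "dual P (fmul \<gamma>) {..<n} QZo" QXo EXo k
  using CX.block_concat_axioms OX.coset_encoding_axioms EXo_subset QXo_subspace is_subspace_vecs
  unfolding concat_code_def concat_code_axioms_def by blast

abbreviation "I \<equiv> {..<n} \<times> {..<n'}"
abbreviation "S \<equiv> vecs (polys_lt r) {..<k}"
abbreviation "QXt \<equiv> space_of (vecs P {..<k}) (concat_enc n n' EncX EXo)"
abbreviation "QZt \<equiv> space_of S (concat_enc n n' EncZ EZo)"

lemma S_subset: "s \<in> S \<Longrightarrow> s \<in> vecs P {..<k}"
  using r_le by (auto simp: vecs_def intro: polys_lt_mono)

lemma dotp_concat_enc: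
  assumes "m \<in> vecs P {..<k}" "s \<in> vecs P {..<k}"
    "xt \<in> concat_enc n n' EncX EXo m" "zt \<in> concat_enc n n' EncZ EZo s"
  shows "dotp (*) I xt zt = tr (dotp (fmul \<gamma>) {..<k} m s)"
proof -
  obtain x' z' where x': "x' \<in> EXo m" "xt \<in> concat_blocks n n' EncX x'"
    and z': "z' \<in> EZo s" "zt \<in> concat_blocks n n' EncZ z'"
    using assms XC.concat_enc_mem ZC.concat_enc_mem by blast
  have "dotp (*) I xt zt = tr (dotp (fmul \<gamma>) {..<n} x' z')"
    using dotp_concat_blocks XC.outer_value_vecs ZC.outer_value_vecs assms x' z' by blast
  also have "dotp (fmul \<gamma>) {..<n} x' z' = dotp (fmul \<gamma>) {..<k} m s"
    using outer_compat assms x' z' unfolding compatible_def by metis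
  finally show ?thesis .
qed

lemma concat_enc_zero_subset_dual_QXt: "concat_enc n n' EncZ EZo 0 \<subseteq> dual UNIV (*) I QXt"
proof
  fix z assume z: "z \<in> concat_enc n n' EncZ EZo 0"
  have "dotp (*) I z x = 0" if x: "x \<in> QXt" for x
  proof -
    obtain m where m: "m \<in> vecs P {..<k}" "x \<in> concat_enc n n' EncX EXo m"
      using x by (auto simp: space_of_def)
    have "(0 :: nat \<Rightarrow> 'a poly) \<in> vecs P {..<k}" by (simp add: vecs_def)
    then have "dotp (*) I x z = 0" using dotp_concat_enc[OF m(1) _ m(2) z] tr_zero by (simp add: dotp_def)
    then show ?thesis by (simp add: dotp_commute)
  qed
  then show "z \<in> dual UNIV (*) I QXt" using ZC.concat_enc_vecs z by (simp add: dual_def)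
qed

lemma dual_QXt_subset_concat_enc_zero: "dual UNIV (*) I QXt \<subseteq> concat_enc n n' EncZ EZo 0"
proof
  fix u assume u: "u \<in> dual UNIV (*) I QXt"
  define Y where "Y = (\<Union>m\<in>vecs P {..<k}. EXo m)"
  have Y: "Y \<subseteq> vecs P {..<n}" "0 \<in> Y" "\<And>c y. c \<in> P \<Longrightarrow> y \<in> Y \<Longrightarrow> smul (fmul \<gamma>) c y \<in> Y"
  proof -
    show "Y \<subseteq> vecs P {..<n}" using XC.outer_value_vecs unfolding Y_def by blast
    have "(0 :: nat \<Rightarrow> 'a poly) \<in> vecs P {..<k}" by (simp add: vecs_def)
    then show "0 \<in> Y" using OX.value_zero add_subgroup_zero[OF OX.kernel] unfolding Y_def by blast
    fix c :: "'a poly" and y assume c: "c \<in> P" and "y \<in> Y"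
    then obtain m where m: "m \<in> vecs P {..<k}" "y \<in> EXo m" unfolding Y_def by blast
    have "smul (fmul \<gamma>) c m \<in> vecs P {..<k}"
      using m(1) fmul_in_polys_lt[OF gamma_nonzero] by (auto simp: vecs_def smul_def)
    then show "smul (fmul \<gamma>) c y \<in> Y" using OX.smul_mem[OF c m] unfolding Y_def by blast
  qed
  have "QXt = (\<Union>y\<in>Y. concat_blocks n n' EncX y)"
    unfolding Y_def space_of_def concat_enc_eq_Union by blast
  then have "u \<in> dual UNIV (*) I (\<Union>y\<in>Y. concat_blocks n n' EncX y)" using u by simp
  then obtain y' where y': "y' \<in> dual P (fmul \<gamma>) {..<n} Y" "u \<in> concat_blocks n n' EncZ y'"
    using dual_concat_space[OF Y] by blast
  have "QXo \<subseteq> Y" unfolding Y_def using OX.surj by blast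
  then have "y' \<in> EZo 0" using y'(1) dual_antimono OZ.value_zero by blast
  then show "u \<in> concat_enc n n' EncZ EZo 0" using y'(2) ZC.concat_enc_mem by blast
qed

lemma dual_QXt: "dual UNIV (*) I QXt = concat_enc n n' EncZ EZo 0"
  using concat_enc_zero_subset_dual_QXt dual_QXt_subset_concat_enc_zero by blast

lemma QZt_subspace: "is_subspace UNIV (*) I QZt"
proof (rule is_subspace_space_of[where dsm="\<lambda>c. smul (fmul \<gamma>) [:c:]"])
  show "s + s' \<in> S" if "s \<in> S" "s' \<in> S" for s s' :: "nat \<Rightarrow> 'a poly"
    using that by (rule vecs_polys_lt_add)
  show "smul (fmul \<gamma>) [:c:] s \<in> S" if "s \<in> S" for c s
    using that unfolding smul_fmul_const[OF S_subset[OF that]] by (auto simp: vecs_def intro: polys_lt_smult)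
  show "u + v \<in> concat_enc n n' EncZ EZo (s + s')"
    if "s \<in> S" "s' \<in> S" "u \<in> concat_enc n n' EncZ EZo s" "v \<in> concat_enc n n' EncZ EZo s'" for s s' u v
    using ZC.concat_enc_add[OF S_subset S_subset] that by blast
  show "smul (*) c u \<in> concat_enc n n' EncZ EZo (smul (fmul \<gamma>) [:c:] s)"
    if "s \<in> S" "u \<in> concat_enc n n' EncZ EZo s" for c s u
    using ZC.concat_enc_smul[OF S_subset] that by blast
qed (use ZC.concat_enc_zero ZC.concat_enc_vecs in \<open>auto simp: vecs_def\<close>)

lemma QXt_subspace: "is_subspace UNIV (*) I QXt"
proof (rule is_subspace_space_of[where dsm="\<lambda>c. smul (fmul \<gamma>) [:c:]"])
  show "m + m' \<in> vecs P {..<k}" if "m \<in> vecs P {..<k}" "m' \<in> vecs P {..<k}" for m m' :: "nat \<Rightarrow> 'a poly"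
    using that by (rule vecs_polys_lt_add)
  show "smul (fmul \<gamma>) [:c:] m \<in> vecs P {..<k}" if "m \<in> vecs P {..<k}" for c m
    using that fmul_in_polys_lt[OF gamma_nonzero] by (auto simp: vecs_def smul_def)
  show "u + v \<in> concat_enc n n' EncX EXo (m + m')"
    if "m \<in> vecs P {..<k}" "m' \<in> vecs P {..<k}" "u \<in> concat_enc n n' EncX EXo m" "v \<in> concat_enc n n' EncX EXo m'"
    for m m' u v
    using XC.concat_enc_add that by blast
  show "smul (*) c u \<in> concat_enc n n' EncX EXo (smul (fmul \<gamma>) [:c:] m)"
    if "m \<in> vecs P {..<k}" "u \<in> concat_enc n n' EncX EXo m" for c m u
    using XC.concat_enc_smul that by blast
qed (use XC.concat_enc_zero XC.concat_enc_vecs in \<open>auto simp: vecs_def\<close>)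

lemma dual_QXt_subset_QZt: "dual UNIV (*) I QXt \<subseteq> QZt"
proof -
  have "(0 :: nat \<Rightarrow> 'a poly) \<in> S" by (simp add: vecs_def)
  then show ?thesis unfolding dual_QXt by (auto simp: space_of_def)
qed

lemma restricted_is_css: "is_css UNIV (*) I QXt QZt"
  unfolding is_css_def using QXt_subspace QZt_subspace dual_QXt_subset_QZt by (intro conjI)

abbreviation "Msgs \<equiv> vecs (UNIV :: 'a set) ({..<k} \<times> A)"
abbreviation "Et \<equiv> (\<lambda>z. space_of (ev_inv k r A z) (concat_enc n n' EncZ EZo))"

lemma Et_eq: assumes "s \<in> ev_inv k r A z" shows "Et z = concat_enc n n' EncZ EZo s"
proof -
  have "ev_inv k r A z = {s}" using assms ev_inv_unique[OF card_A] by blast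
  then show ?thesis by (simp add: space_of_def)
qed

lemma restricted_enc_memE:
  assumes "u \<in> Et z"
  obtains s y where "s \<in> ev_inv k r A z" "s \<in> vecs P {..<k}" "y \<in> EZo s" "y \<in> vecs P {..<n}"
    "u \<in> concat_blocks n n' EncZ y"
proof -
  obtain s y where "s \<in> ev_inv k r A z" "y \<in> EZo s" "u \<in> concat_blocks n n' EncZ y"
    using assms unfolding space_of_def concat_enc_eq_Union by blast
  moreover have "s \<in> vecs P {..<k}" using S_subset ev_inv_vecs calculation(1) by blast
  ultimately show thesis using that ZC.outer_value_vecs by blast
qed

lemma ev_inv_nonemptyE:
  assumes "z \<in> Msgs" obtains s where "s \<in> ev_inv k r A z" "s \<in> vecs P {..<k}"
  using ev_inv_nonempty[OF card_A assms] ev_inv_vecs S_subset by blast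

lemma restricted_is_enc: "is_enc UNIV (*) (dual UNIV (*) I QXt) QZt (smul (*)) Msgs Et"
  unfolding is_enc_def
proof (intro conjI ballI)
  fix z assume "z \<in> Msgs"
  then obtain s where s: "s \<in> ev_inv k r A z" "s \<in> vecs P {..<k}" by (rule ev_inv_nonemptyE)
  obtain v where v: "v \<in> concat_enc n n' EncZ EZo s" using ZC.concat_enc_nonempty[OF s(2)] by blast
  have "v \<in> QZt" using v ev_inv_vecs[OF s(1)] by (auto simp: space_of_def)
  moreover have "Et z = (\<lambda>w. v + w) ` dual UNIV (*) I QXt"
    unfolding Et_eq[OF s(1)] dual_QXt using ZC.concat_enc_coset[OF s(2) v] .
  ultimately show "\<exists>v\<in>QZt. Et z = (\<lambda>w. v + w) ` dual UNIV (*) I QXt" by blast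
next
  fix x y u v assume x: "x \<in> Msgs" and y: "y \<in> Msgs" and uv: "u \<in> Et x" "v \<in> Et y"
  obtain s where s: "s \<in> ev_inv k r A x" "s \<in> vecs P {..<k}" using x by (rule ev_inv_nonemptyE)
  obtain s' where s': "s' \<in> ev_inv k r A y" "s' \<in> vecs P {..<k}" using y by (rule ev_inv_nonemptyE)
  show "u + v \<in> Et (x + y)"
    using uv ZC.concat_enc_add[OF s(2) s'(2)] unfolding Et_eq[OF s(1)] Et_eq[OF s'(1)] Et_eq[OF ev_inv_add[OF s(1) s'(1)]]
    by blast
next
  fix c :: 'a and x u assume x: "x \<in> Msgs" and u: "u \<in> Et x"
  obtain s where s: "s \<in> ev_inv k r A x" "s \<in> vecs P {..<k}" using x by (rule ev_inv_nonemptyE)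
  show "smul (*) c u \<in> Et (smul (*) c x)"
    using u ZC.concat_enc_smul[OF s(2)] unfolding Et_eq[OF s(1)] Et_eq[OF ev_inv_smul[OF s(1) r_le]] by blast
next
  show "inj_on Et Msgs"
  proof (rule inj_onI)
    fix x y assume x: "x \<in> Msgs" and y: "y \<in> Msgs" and eq: "Et x = Et y"
    obtain s where s: "s \<in> ev_inv k r A x" "s \<in> vecs P {..<k}" using x by (rule ev_inv_nonemptyE)
    obtain s' where s': "s' \<in> ev_inv k r A y" "s' \<in> vecs P {..<k}" using y by (rule ev_inv_nonemptyE)
    obtain u where u: "u \<in> concat_enc n n' EncZ EZo s" using ZC.concat_enc_nonempty[OF s(2)] by blast
    then have "u \<in> concat_enc n n' EncZ EZo s'" using eq unfolding Et_eq[OF s(1)] Et_eq[OF s'(1)] by simp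
    then have "s = s'" by (rule ZC.concat_enc_inj[OF s(2) s'(2) u _ refl])
    then show "x = y" using ev_inv_inj[OF s(1) _ x y] s'(1) by simp
  qed
next
  fix v assume "v \<in> QZt"
  then obtain s where s: "s \<in> S" "v \<in> concat_enc n n' EncZ EZo s" by (auto simp: space_of_def)
  from ev_inv_of_vecs[OF s(1)] obtain z where "z \<in> Msgs" "s \<in> ev_inv k r A z" ..
  then show "\<exists>z\<in>Msgs. v \<in> Et z" using Et_eq s(2) by blast
qed

sublocale ET: coset_encoding UNIV "(*)" "dual UNIV (*) I QXt" QZt "smul (*)" Msgs Et
  by unfold_locales (rule restricted_is_enc, rule add_subgroup_dual, auto simp: vecs_def)

text \<open>Counting: \<open>Q\<^sub>Z\<close> is a disjoint union of \<open>q\<^sup>r\<^sup>k\<close> cosets of \<open>Q\<^sub>X\<^sup>\<bottom>\<close>.\<close>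

lemma restricted_css_dim: "css_dim UNIV (*) I QXt QZt (r * k)"
proof -
  have fin_I: "finite I" by simp
  obtain b where b: "has_dim UNIV (*) (dual UNIV (*) I QXt) b"
    using has_dim_exists[OF is_subspace_dual fin_I] by blast
  obtain a where a: "has_dim UNIV (*) QZt a" using has_dim_exists[OF QZt_subspace fin_I] by blast
  have fin_W: "finite (dual UNIV (*) I QXt)" using finite_is_subspace[OF is_subspace_dual fin_I] .
  have fin_Msgs: "finite Msgs" by (simp add: finite_vecs)
  have "card QZt = card Msgs * card (dual UNIV (*) I QXt)"
    using ET.card_codomain[OF fin_Msgs fin_W dual_QXt_subset_QZt is_subspace_add_subgroup[OF QZt_subspace]] .
  moreover have "card Msgs = card (UNIV :: 'a set) ^ (k * r)"
    using card_vecs[of "{..<k} \<times> A"] card_A by (simp add: card_cartesian_product)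
  ultimately have "card (UNIV :: 'a set) ^ a = card (UNIV :: 'a set) ^ (k * r + b)"
    using has_dim_card[OF a] has_dim_card[OF b] by (simp add: power_add)
  then have "a = k * r + b" using card_field_ge_2[where 'a='a] by (simp add: power_inject_exp)
  then show ?thesis unfolding css_dim_def using a b by (intro exI[of _ a] exI[of _ b]) simp
qed

lemma wt_block_of_concat_Z:
  assumes "y' \<in> vecs P {..<n}" "w \<in> concat_blocks n n' EncZ y'" "j < n" "y' j \<noteq> 0"
  shows "d_in \<le> wt {..<n'} (blk w j)"
proof -
  have b: "blk w j \<in> EncZ (y' j)" using assms(2,3) by (auto simp: concat_blocks_def)
  have "blk w j \<in> QZ" using encZ_subset[OF vecs_polys_lt_component[OF assms(1)]] b by blast
  moreover have "blk w j \<notin> dual UNIV (*) {..<n'} QX"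
    using Z.kernel_imp_zero[OF vecs_polys_lt_component[OF assms(1)] b] assms(4) by blast
  ultimately show ?thesis using inner_dist by (auto simp: css_dist_ge_def logicals_def)
qed

lemma wt_block_of_concat_X:
  assumes "x' \<in> vecs P {..<n}" "w \<in> concat_blocks n n' EncX x'" "j < n" "x' j \<noteq> 0"
  shows "d_in \<le> wt {..<n'} (blk w j)"
proof -
  have b: "blk w j \<in> EncX (x' j)" using assms(2,3) by (auto simp: concat_blocks_def)
  have "blk w j \<in> QX" using encX_subset[OF vecs_polys_lt_component[OF assms(1)]] b by blast
  moreover have "blk w j \<notin> dual UNIV (*) {..<n'} QZ"
    using X.kernel_imp_zero[OF vecs_polys_lt_component[OF assms(1)] b] assms(4) by blast
  ultimately show ?thesis using inner_dist by (auto simp: css_dist_ge_def logicals_def)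
qed

lemma wt_Z_logical_ge:
  assumes "w \<in> QZt - dual UNIV (*) I QXt" shows "d_in * d_out \<le> wt I w"
proof -
  obtain s where s: "s \<in> S" "w \<in> concat_enc n n' EncZ EZo s" using assms by (auto simp: space_of_def)
  then obtain y' where y': "y' \<in> EZo s" "w \<in> concat_blocks n n' EncZ y'" using ZC.concat_enc_mem by blast
  have y'v: "y' \<in> vecs P {..<n}" using ZC.outer_value_vecs[OF S_subset[OF s(1)] y'(1)] .
  have "y' \<notin> dual P (fmul \<gamma>) {..<n} QXo"
  proof
    assume "y' \<in> dual P (fmul \<gamma>) {..<n} QXo"
    then have "s = 0" using OZ.kernel_imp_zero[OF S_subset[OF s(1)] y'(1)] by blast
    then show False using assms s(2) dual_QXt by auto
  qed
  then have "d_out \<le> wt {..<n} y'"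
    using EZo_subset[OF S_subset[OF s(1)]] y'(1) outer_dist by (auto simp: css_dist_ge_def logicals_def)
  then show ?thesis using wt_concat_ge wt_block_of_concat_Z[OF y'v y'(2)] by blast
qed

lemma wt_X_logical_ge:
  assumes "w \<in> QXt - dual UNIV (*) I QZt" shows "d_in * d_out \<le> wt I w"
proof -
  obtain m where m: "m \<in> vecs P {..<k}" "w \<in> concat_enc n n' EncX EXo m" using assms by (auto simp: space_of_def)
  then obtain x' where x': "x' \<in> EXo m" "w \<in> concat_blocks n n' EncX x'" using XC.concat_enc_mem by blast
  have x'v: "x' \<in> vecs P {..<n}" using XC.outer_value_vecs[OF m(1) x'(1)] .
  have "m \<noteq> 0"
  proof
    assume "m = 0"
    have "dotp (*) I w z = 0" if z: "z \<in> QZt" for z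
    proof -
      obtain s where s: "s \<in> S" "z \<in> concat_enc n n' EncZ EZo s" using z by (auto simp: space_of_def)
      show ?thesis
        using dotp_concat_enc[OF m(1) S_subset[OF s(1)] m(2) s(2)] \<open>m = 0\<close> tr_zero by (simp add: dotp_def)
    qed
    then have "w \<in> dual UNIV (*) I QZt" using XC.concat_enc_vecs[OF m(2)] by (simp add: dual_def)
    then show False using assms by blast
  qed
  then have "x' \<notin> dual P (fmul \<gamma>) {..<n} QZo" using OX.kernel_imp_zero[OF m(1) x'(1)] by blast
  then have "d_out \<le> wt {..<n} x'"
    using EXo_subset[OF m(1)] x'(1) outer_dist by (auto simp: css_dist_ge_def logicals_def)
  then show ?thesis using wt_concat_ge wt_block_of_concat_X[OF x'v x'(2)] by blast
qed

lemma restricted_dist_ge: "css_dist_ge UNIV (*) I QXt QZt (d_in * d_out)"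
  unfolding css_dist_ge_def logicals_def using wt_Z_logical_ge wt_X_logical_ge by blast

end

section \<open>The transversal gate\<close>

lemma prod_fun_apply: "(\<Prod>a\<in>A. f a) x = (\<Prod>a\<in>A. f a x)"
  by (induct A rule: infinite_finite_induct) auto

lemma prod_in_vecs:
  fixes u :: "'h \<Rightarrow> 'i \<Rightarrow> 'a::comm_semiring_1"
  assumes "h0 \<in> A" "finite A" "u h0 \<in> vecs UNIV I" shows "(\<Prod>h\<in>A. u h) \<in> vecs UNIV I"
proof -
  have "(\<Prod>h\<in>A. u h i) = u h0 i * (\<Prod>h\<in>A - {h0}. u h i)" for i
    using assms(1,2) by (simp add: prod.remove)
  then show ?thesis using assms(3) by (auto simp: vecs_def prod_fun_apply)
qed

lemma vecs_eq_sum_unit_vec: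
  "v \<in> vecs UNIV {..<n} \<Longrightarrow> v = (\<Sum>i<n. smul (*) (v i) (unit_vec i :: nat \<Rightarrow> 'a::comm_ring_1))"
  by (auto simp: fun_eq_iff sum_fun_apply smul_def unit_vec_def vecs_def if_distrib cong: if_cong)

lemma vecs_linear_expand:
  fixes f :: "(nat \<Rightarrow> 'a::comm_ring_1) \<Rightarrow> 'a"
  assumes add: "\<And>u v. u \<in> vecs UNIV {..<n} \<Longrightarrow> v \<in> vecs UNIV {..<n} \<Longrightarrow> f (u + v) = f u + f v"
    and hom: "\<And>c u. u \<in> vecs UNIV {..<n} \<Longrightarrow> f (smul (*) c u) = c * f u"
    and v: "v \<in> vecs UNIV {..<n}"
  shows "f v = (\<Sum>i<n. v i * f (unit_vec i))"
proof -
  have unit: "unit_vec i \<in> vecs UNIV {..<n}" "smul (*) c (unit_vec i) \<in> vecs UNIV {..<n}"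
    if "i < n" for i and c :: 'a
    using that by (auto simp: vecs_def smul_def unit_vec_def)
  have "(\<Sum>i\<in>S. smul (*) (v i) (unit_vec i)) \<in> vecs UNIV {..<n} \<and>
      f (\<Sum>i\<in>S. smul (*) (v i) (unit_vec i)) = (\<Sum>i\<in>S. v i * f (unit_vec i))" if "S \<subseteq> {..<n}" for S
    using that
  proof (induct S rule: infinite_finite_induct)
    case (infinite S)
    then show ?case using finite_subset by blast
  next
    case empty
    have "(0 :: nat \<Rightarrow> 'a) \<in> vecs UNIV {..<n}" by (simp add: vecs_def)
    then show ?case using hom[of 0 0] by (simp add: smul_def zero_fun_def)
  next
    case (insert i S)
    define w where "w = (\<Sum>i\<in>S. smul (*) (v i) (unit_vec i))"
    have i: "i < n" and w: "w \<in> vecs UNIV {..<n}" "f w = (\<Sum>i\<in>S. v i * f (unit_vec i))"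
      using insert by (auto simp: w_def)
    have "f (smul (*) (v i) (unit_vec i) + w) = v i * f (unit_vec i) + f w"
      using add[OF unit(2)[OF i] w(1)] hom[OF unit(1)[OF i]] by simp
    moreover have "smul (*) (v i) (unit_vec i) + w \<in> vecs UNIV {..<n}"
      using unit(2)[OF i] w(1) by (auto simp: vecs_def)
    ultimately show ?case
      unfolding sum.insert[OF insert(1,2)] w_def[symmetric] w(2) by blast
  qed
  then show ?thesis using vecs_eq_sum_unit_vec[OF v] by (metis order_refl)
qed

lemma mult_friendly_trace:
  fixes \<gamma> :: "'a::{finite,field} poly"
  assumes mf: "mult_friendly m \<gamma> n' E" and T: "linear_on_polys_lt (degree \<gamma>) T" and m: "m > 0"
  obtains c where "\<And>z u. \<forall>h<m. z h \<in> polys_lt (degree \<gamma>) \<and> u h \<in> E h (z h) \<and> u h \<in> vecs UNIV {..<n'} \<Longrightarrow>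
      T ((\<Prod>h<m. z h) mod \<gamma>) = (\<Sum>l<n'. c l * (\<Prod>h<m. u h l))"
proof -
  obtain Dec :: "(nat \<Rightarrow> 'a) \<Rightarrow> 'a poly" where
    Dec_P: "\<And>u. u \<in> vecs UNIV {..<n'} \<Longrightarrow> Dec u \<in> polys_lt (degree \<gamma>)" and
    Dec_add: "\<And>u v. u \<in> vecs UNIV {..<n'} \<Longrightarrow> v \<in> vecs UNIV {..<n'} \<Longrightarrow> Dec (u + v) = Dec u + Dec v" and
    Dec_smul: "\<And>c u. u \<in> vecs UNIV {..<n'} \<Longrightarrow> Dec (smul (*) c u) = smult c (Dec u)" and
    Dec_prod: "\<And>z u. \<forall>h<m. z h \<in> polys_lt (degree \<gamma>) \<and> u h \<in> E h (z h) \<Longrightarrow> (\<Prod>h<m. z h) mod \<gamma> = Dec (\<Prod>h<m. u h)"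
    using mf unfolding mult_friendly_def by blast
  have TDec: "T (Dec v) = (\<Sum>l<n'. v l * T (Dec (unit_vec l)))" if "v \<in> vecs UNIV {..<n'}" for v
  proof (rule vecs_linear_expand[where f="\<lambda>v. T (Dec v)", OF _ _ that])
    show "T (Dec (u + v)) = T (Dec u) + T (Dec v)" if "u \<in> vecs UNIV {..<n'}" "v \<in> vecs UNIV {..<n'}" for u v
      using T Dec_P[OF that(1)] Dec_P[OF that(2)] unfolding Dec_add[OF that] linear_on_polys_lt_def by blast
    show "T (Dec (smul (*) c u)) = c * T (Dec u)" if "u \<in> vecs UNIV {..<n'}" for c u
      using T Dec_P[OF that] unfolding Dec_smul[OF that] linear_on_polys_lt_def by blast
  qed
  show thesis
  proof (rule that[of "\<lambda>l. T (Dec (unit_vec l))"])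
    fix z u assume zu: "\<forall>h<m. z h \<in> polys_lt (degree \<gamma>) \<and> u h \<in> E h (z h) \<and> u h \<in> vecs UNIV {..<n'}"
    have "(\<Prod>h<m. u h) \<in> vecs UNIV {..<n'}" using zu m by (intro prod_in_vecs[of 0]) auto
    moreover have "(\<Prod>h<m. z h) mod \<gamma> = Dec (\<Prod>h<m. u h)" using Dec_prod zu by blast
    ultimately show "T ((\<Prod>h<m. z h) mod \<gamma>) = (\<Sum>l<n'. T (Dec (unit_vec l)) * (\<Prod>h<m. u h l))"
      using TDec by (simp add: prod_fun_apply mult.commute)
  qed
qed

lemma prod_lessThan_4: "(\<Prod>h<(4::nat). f h) = f 0 * f 1 * f 2 * (f 3 :: 'a::comm_monoid_mult)"
proof -
  have "{..<4::nat} = {0, 1, 2, 3}" by auto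
  then show ?thesis by (simp add: mult.assoc)
qed

lemma fmul_chain_eq_prod_mod:
  "fmul \<gamma> \<beta> (fmul \<gamma> (fmul \<gamma> (fmul \<gamma> b y1) y2) y3) = (\<Prod>h<4. [y1, y2, y3, fmul \<gamma> \<beta> b] ! h) mod \<gamma>"
proof -
  have "fmul \<gamma> (fmul \<gamma> (fmul \<gamma> b y1) y2) y3 = (b * y1 * y2 * y3) mod \<gamma>"
    unfolding fmul_def by (metis mod_mult_left_eq)
  then have "fmul \<gamma> \<beta> (fmul \<gamma> (fmul \<gamma> (fmul \<gamma> b y1) y2) y3) = (y1 * y2 * y3 * (\<beta> * b)) mod \<gamma>"
    by (simp add: fmul_def mod_mult_right_eq mult_ac)
  also have "\<dots> = (y1 * y2 * y3 * ((\<beta> * b) mod \<gamma>)) mod \<gamma>" by (rule mod_mult_right_eq[symmetric])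
  finally show ?thesis by (simp add: prod_lessThan_4 fmul_def)
qed

lemma mult_friendly_gate_coefficient:
  fixes \<gamma> :: "'a::field poly" and E :: "nat \<Rightarrow> 'a poly \<Rightarrow> (nat \<Rightarrow> 'a) set"
  assumes c: "\<And>z u. \<forall>h<4. z h \<in> polys_lt (degree \<gamma>) \<and> u h \<in> E h (z h) \<and> u h \<in> vecs UNIV {..<n'} \<Longrightarrow>
      T ((\<Prod>h<4. z h) mod \<gamma>) = (\<Sum>l<n'. c l * (\<Prod>h<4. u h l))"
    and y: "y1 \<in> polys_lt (degree \<gamma>)" "y2 \<in> polys_lt (degree \<gamma>)" "y3 \<in> polys_lt (degree \<gamma>)"
      "fmul \<gamma> \<beta> b \<in> polys_lt (degree \<gamma>)"
    and v: "v1 \<in> E 0 y1" "v2 \<in> E 1 y2" "v3 \<in> E 2 y3" "w \<in> E 3 (fmul \<gamma> \<beta> b)"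
    and v_vecs: "v1 \<in> vecs UNIV {..<n'}" "v2 \<in> vecs UNIV {..<n'}" "v3 \<in> vecs UNIV {..<n'}" "w \<in> vecs UNIV {..<n'}"
  shows "T (fmul \<gamma> \<beta> (fmul \<gamma> (fmul \<gamma> (fmul \<gamma> b y1) y2) y3)) = (\<Sum>l<n'. c l * w l * v1 l * v2 l * v3 l)"
proof -
  have "\<forall>h<4. [y1, y2, y3, fmul \<gamma> \<beta> b] ! h \<in> polys_lt (degree \<gamma>)
      \<and> [v1, v2, v3, w] ! h \<in> E h ([y1, y2, y3, fmul \<gamma> \<beta> b] ! h) \<and> [v1, v2, v3, w] ! h \<in> vecs UNIV {..<n'}"
    using y v v_vecs by (auto simp: less_Suc_eq numeral_eq_Suc)
  from c[OF this] show ?thesis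
    unfolding fmul_chain_eq_prod_mod by (simp add: prod_lessThan_4 mult_ac)
qed

lemma prod3_in_polys_lt:
  assumes "a \<in> polys_lt r" "b \<in> polys_lt r" "c \<in> polys_lt r" "3 * (r - 1) < m"
  shows "a * b * c \<in> polys_lt m"
proof -
  have "degree (a * b * c) \<le> degree a + degree b + degree c"
    by (meson add_le_mono degree_mult_le order_trans order_refl)
  also have "\<dots> \<le> 3 * (r - 1)" using polys_lt_degree_le[OF assms(1)] polys_lt_degree_le[OF assms(2)]
      polys_lt_degree_le[OF assms(3)] by simp
  finally show ?thesis using assms(4) by (simp add: polys_lt_def)
qed

context inner_code
begin

text \<open>As \<open>3 (r - 1) < k'\<close>, the product of the three interpolating polynomials needs no reduction
  modulo \<open>\<gamma>\<close>, so evaluating it on \<open>A\<close> is a linear functional of the field element.\<close>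

lemma sum_eval_prod_eq_tr:
  assumes \<beta>: "\<And>p. p \<in> P \<Longrightarrow> (\<Sum>a\<in>A. poly p a) = tr (fmul \<gamma> \<beta> p)"
    and s: "s1 \<in> ev_inv k r A z1" "s2 \<in> ev_inv k r A z2" "s3 \<in> ev_inv k r A z3"
    and r: "3 * (r - 1) < degree \<gamma>"
  shows "(\<Sum>x\<in>{..<k} \<times> A. z1 x * z2 x * z3 x) = tr (fmul \<gamma> \<beta> (\<Sum>j<k. fmul \<gamma> (fmul \<gamma> (s1 j) (s2 j)) (s3 j)))"
proof -
  define p where "p j = s1 j * s2 j * s3 j" for j
  have pP: "p j \<in> P" for j
    unfolding p_def using s r by (intro prod3_in_polys_lt) (auto dest!: ev_inv_vecs intro: vecs_polys_lt_component)
  have "(\<Sum>x\<in>{..<k} \<times> A. z1 x * z2 x * z3 x) = (\<Sum>j<k. \<Sum>a\<in>A. z1 (j, a) * z2 (j, a) * z3 (j, a))"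
    by (simp add: sum.cartesian_product)
  also have "\<dots> = (\<Sum>j<k. \<Sum>a\<in>A. poly (p j) a)"
    using s by (simp add: ev_inv_def p_def)
  also have "\<dots> = (\<Sum>j<k. tr (fmul \<gamma> \<beta> (p j)))" using \<beta> pP by simp
  also have "\<dots> = tr (fmul \<gamma> \<beta> (\<Sum>j<k. p j))"
    unfolding fmul_sum_right using tr_sum fmul_in_polys_lt[OF gamma_nonzero] by metis
  also have "(\<Sum>j<k. p j) = (\<Sum>j<k. fmul \<gamma> (fmul \<gamma> (s1 j) (s2 j)) (s3 j))"
    using polys_lt_mod[OF pP] by (simp add: fmul_fmul_eq_mod p_def)
  finally show ?thesis .
qed

end

lemma restricted_transversal_ccz:
  fixes \<gamma> :: "'a::{finite,field} poly" and A :: "'a set"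
    and QXi QZi :: "nat \<Rightarrow> (nat \<Rightarrow> 'a) set" and EZi EXi :: "nat \<Rightarrow> 'a poly \<Rightarrow> (nat \<Rightarrow> 'a) set"
    and QXo QZo :: "nat \<Rightarrow> (nat \<Rightarrow> 'a poly) set"
    and EZo EXo :: "nat \<Rightarrow> (nat \<Rightarrow> 'a poly) \<Rightarrow> (nat \<Rightarrow> 'a poly) set" and d_in d_out :: "nat \<Rightarrow> nat"
  assumes inner: "\<And>h. h < 4 \<Longrightarrow> inner_code \<gamma> n' (QXi h) (QZi h) (EZi h) (EXi h)"
    and C: "\<And>h. h < 3 \<Longrightarrow> restricted_concat \<gamma> n' (QXi h) (QZi h) (EZi h) (EXi h) n k r A
      (QXo h) (QZo h) (EZo h) (EXo h) (d_in h) (d_out h)"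
    and mf: "mult_friendly 4 \<gamma> n' EZi"
    and outer_ccz: "transversal_ccz (polys_lt (degree \<gamma>)) (fmul \<gamma>) {..<n} {..<k} (EZo 0) (EZo 1) (EZo 2)"
    and r: "3 * (r - 1) < degree \<gamma>"
  shows "transversal_ccz UNIV (*) ({..<n} \<times> {..<n'}) ({..<k} \<times> A)
        (\<lambda>z. space_of (ev_inv k r A z) (concat_enc n n' (EZi 0) (EZo 0)))
        (\<lambda>z. space_of (ev_inv k r A z) (concat_enc n n' (EZi 1) (EZo 1)))
        (\<lambda>z. space_of (ev_inv k r A z) (concat_enc n n' (EZi 2) (EZo 2)))"
proof -
  interpret C0: restricted_concat \<gamma> n' "QXi 0" "QZi 0" "EZi 0" "EXi 0" n k r A "QXo 0" "QZo 0" "EZo 0" "EXo 0" "d_in 0" "d_out 0"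
    using C[of 0] by simp
  interpret C1: restricted_concat \<gamma> n' "QXi 1" "QZi 1" "EZi 1" "EXi 1" n k r A "QXo 1" "QZo 1" "EZo 1" "EXo 1" "d_in 1" "d_out 1"
    using C[of 1] by simp
  interpret C2: restricted_concat \<gamma> n' "QXi 2" "QZi 2" "EZi 2" "EXi 2" n k r A "QXo 2" "QZo 2" "EZo 2" "EXo 2" "d_in 2" "d_out 2"
    using C[of 2] by simp
  interpret C3: inner_code \<gamma> n' "QXi 3" "QZi 3" "EZi 3" "EXi 3" using inner[of 3] by simp
  obtain c where c: "\<And>z u. \<forall>h<4. z h \<in> C0.P \<and> u h \<in> EZi h (z h) \<and> u h \<in> vecs UNIV {..<n'} \<Longrightarrow>
      C0.tr ((\<Prod>h<4. z h) mod \<gamma>) = (\<Sum>l<n'. c l * (\<Prod>h<4. u h l))"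
    using mult_friendly_trace[OF mf C0.linear_on_polys_lt_tr] by auto
  have "linear_on_polys_lt (degree \<gamma>) (\<lambda>p. \<Sum>a\<in>A. poly p a)"
    by (simp add: linear_on_polys_lt_def sum.distrib sum_distrib_left)
  then obtain \<beta> where \<beta>: "\<And>p. p \<in> C0.P \<Longrightarrow> (\<Sum>a\<in>A. poly p a) = C0.tr (fmul \<gamma> \<beta> p)"
    using C0.tr_represents_functional by blast
  obtain bo where outer_gate: "\<And>s1 s2 s3 y1 y2 y3. s1 \<in> vecs C0.P {..<k} \<Longrightarrow> s2 \<in> vecs C0.P {..<k} \<Longrightarrow>
      s3 \<in> vecs C0.P {..<k} \<Longrightarrow> y1 \<in> EZo 0 s1 \<Longrightarrow> y2 \<in> EZo 1 s2 \<Longrightarrow> y3 \<in> EZo 2 s3 \<Longrightarrow>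
      (\<Sum>j<k. fmul \<gamma> (fmul \<gamma> (s1 j) (s2 j)) (s3 j)) = (\<Sum>i<n. fmul \<gamma> (fmul \<gamma> (fmul \<gamma> (bo i) (y1 i)) (y2 i)) (y3 i))"
    using outer_ccz unfolding transversal_ccz_def by blast
  \<comment> \<open>the fourth code encodes the outer gate coefficients scaled by \<open>\<beta>\<close>\<close>
  define wv where "wv i = (SOME u. u \<in> EZi 3 (fmul \<gamma> \<beta> (bo i)))" for i
  have wv: "wv i \<in> EZi 3 (fmul \<gamma> \<beta> (bo i))" for i
    unfolding wv_def using C3.Z.value_nonempty[OF fmul_in_polys_lt[OF C3.gamma_nonzero]] by (rule someI_ex)
  define b where "b = (\<lambda>(i, l). if i < n \<and> l < n' then c l * wv i l else (0::'a))"
  have b_vecs: "b \<in> vecs UNIV ({..<n} \<times> {..<n'})" by (auto simp: b_def vecs_def)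
  show ?thesis unfolding transversal_ccz_def
  proof (rule bexI[OF _ b_vecs], intro ballI)
    fix z1 z2 z3 u1 u2 u3
    assume u: "u1 \<in> space_of (ev_inv k r A z1) (concat_enc n n' (EZi 0) (EZo 0))"
      "u2 \<in> space_of (ev_inv k r A z2) (concat_enc n n' (EZi 1) (EZo 1))"
      "u3 \<in> space_of (ev_inv k r A z3) (concat_enc n n' (EZi 2) (EZo 2))"
    obtain s1 y1 where s1: "s1 \<in> ev_inv k r A z1" "s1 \<in> vecs C0.P {..<k}" and y1: "y1 \<in> EZo 0 s1"
      "y1 \<in> vecs C0.P {..<n}" "u1 \<in> concat_blocks n n' (EZi 0) y1" by (rule C0.restricted_enc_memE[OF u(1)])
    obtain s2 y2 where s2: "s2 \<in> ev_inv k r A z2" "s2 \<in> vecs C0.P {..<k}" and y2: "y2 \<in> EZo 1 s2"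
      "y2 \<in> vecs C0.P {..<n}" "u2 \<in> concat_blocks n n' (EZi 1) y2" by (rule C1.restricted_enc_memE[OF u(2)])
    obtain s3 y3 where s3: "s3 \<in> ev_inv k r A z3" "s3 \<in> vecs C0.P {..<k}" and y3: "y3 \<in> EZo 2 s3"
      "y3 \<in> vecs C0.P {..<n}" "u3 \<in> concat_blocks n n' (EZi 2) y3" by (rule C2.restricted_enc_memE[OF u(3)])
    have yP: "y1 i \<in> C0.P" "y2 i \<in> C0.P" "y3 i \<in> C0.P" for i
      using y1(2) y2(2) y3(2) by (simp_all add: vecs_polys_lt_component)
    have pos: "C0.tr (fmul \<gamma> \<beta> (fmul \<gamma> (fmul \<gamma> (fmul \<gamma> (bo i) (y1 i)) (y2 i)) (y3 i)))
        = (\<Sum>l<n'. b (i, l) * u1 (i, l) * u2 (i, l) * u3 (i, l))" if i: "i < n" for i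
    proof -
      have blk: "blk u1 i \<in> EZi 0 (y1 i)" "blk u2 i \<in> EZi 1 (y2 i)" "blk u3 i \<in> EZi 2 (y3 i)"
        using y1(3) y2(3) y3(3) i by (auto simp: concat_blocks_def)
      have \<beta>b: "fmul \<gamma> \<beta> (bo i) \<in> C0.P" using fmul_in_polys_lt[OF C0.gamma_nonzero] .
      have "blk u1 i \<in> vecs UNIV {..<n'}" "blk u2 i \<in> vecs UNIV {..<n'}" "blk u3 i \<in> vecs UNIV {..<n'}"
        "wv i \<in> vecs UNIV {..<n'}"
        using C0.encZ_vecs[OF yP(1) blk(1)] C1.encZ_vecs[OF yP(2) blk(2)] C2.encZ_vecs[OF yP(3) blk(3)]
          C3.encZ_vecs[OF \<beta>b wv] by simp_all
      from mult_friendly_gate_coefficient[where E=EZi and T="ftrace \<gamma>" and c=c,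
          OF c yP(1)[of i] yP(2)[of i] yP(3)[of i] \<beta>b blk wv[of i] this] show ?thesis
        using i by (simp add: b_def blk_def mult_ac)
    qed
    have "(\<Sum>x\<in>{..<k} \<times> A. z1 x * z2 x * z3 x)
        = C0.tr (fmul \<gamma> \<beta> (\<Sum>j<k. fmul \<gamma> (fmul \<gamma> (s1 j) (s2 j)) (s3 j)))"
      by (rule C0.sum_eval_prod_eq_tr[OF \<beta> s1(1) s2(1) s3(1) r])
    also have "\<dots> = C0.tr (fmul \<gamma> \<beta> (\<Sum>i<n. fmul \<gamma> (fmul \<gamma> (fmul \<gamma> (bo i) (y1 i)) (y2 i)) (y3 i)))"
      by (simp only: outer_gate[OF s1(2) s2(2) s3(2) y1(1) y2(1) y3(1)])
    also have "\<dots> = (\<Sum>i<n. C0.tr (fmul \<gamma> \<beta> (fmul \<gamma> (fmul \<gamma> (fmul \<gamma> (bo i) (y1 i)) (y2 i)) (y3 i))))"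
      unfolding fmul_sum_right by (rule C0.tr_sum, rule fmul_in_polys_lt[OF C0.gamma_nonzero])
    also have "\<dots> = (\<Sum>x\<in>{..<n} \<times> {..<n'}. b x * u1 x * u2 x * u3 x)"
      using pos by (simp add: sum.cartesian_product)
    finally show "(\<Sum>j\<in>{..<k} \<times> A. z1 j * z2 j * z3 j) = (\<Sum>i\<in>{..<n} \<times> {..<n'}. b i * u1 i * u2 i * u3 i)" .
  qed
qed

lemma (in restricted_concat) restricted_concat_code:
  "is_css UNIV (*) I QXt QZt \<and> css_dim UNIV (*) I QXt QZt (r * k)
    \<and> is_enc UNIV (*) (dual UNIV (*) I QXt) QZt (smul (*)) Msgs Et
    \<and> css_dist_ge UNIV (*) I QXt QZt (d_in * d_out)"
  using restricted_is_css restricted_css_dim restricted_is_enc restricted_dist_ge by blast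

theorem proposition5p1:
  fixes n' k' n k r :: nat
    and A :: "'a::{finite,field} set"
    and \<gamma> :: "'a poly"
    and QXi QZi :: "nat \<Rightarrow> (nat \<Rightarrow> 'a) set"
    and EZi EXi :: "nat \<Rightarrow> 'a poly \<Rightarrow> (nat \<Rightarrow> 'a) set"
    and di :: "nat \<Rightarrow> nat"
    and QXo QZo :: "nat \<Rightarrow> (nat \<Rightarrow> 'a poly) set"
    and EZo EXo :: "nat \<Rightarrow> (nat \<Rightarrow> 'a poly) \<Rightarrow> (nat \<Rightarrow> 'a poly) set"
    and dout :: "nat \<Rightarrow> nat"
  assumes gamma_irr: "irreducible \<gamma>" and gamma_deg: "degree \<gamma> = k'"
    and inner: "\<forall>h<4. is_css UNIV (*) {..<n'} (QXi h) (QZi h)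
        \<and> css_dim UNIV (*) {..<n'} (QXi h) (QZi h) k'
        \<and> css_dist UNIV (*) {..<n'} (QXi h) (QZi h) (di h)
        \<and> is_enc UNIV (*) (dual UNIV (*) {..<n'} (QXi h)) (QZi h) smult (polys_lt k') (EZi h)"
    and mf: "mult_friendly 4 \<gamma> n' EZi"
    and outer: "\<forall>h<3. is_css (polys_lt k') (fmul \<gamma>) {..<n} (QXo h) (QZo h)
        \<and> css_dim (polys_lt k') (fmul \<gamma>) {..<n} (QXo h) (QZo h) k
        \<and> css_dist (polys_lt k') (fmul \<gamma>) {..<n} (QXo h) (QZo h) (dout h)
        \<and> is_enc (polys_lt k') (fmul \<gamma>) (dual (polys_lt k') (fmul \<gamma>) {..<n} (QXo h)) (QZo h)
             (smul (fmul \<gamma>)) (vecs (polys_lt k') {..<k}) (EZo h)"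
    and outer_ccz: "transversal_ccz (polys_lt k') (fmul \<gamma>) {..<n} {..<k} (EZo 0) (EZo 1) (EZo 2)"
    and r_bound: "3 * (r - 1) < k'" and r_le_q: "r \<le> card (UNIV :: 'a set)" and A_card: "card A = r"
    and innerX: "\<forall>h<4. is_enc UNIV (*) (dual UNIV (*) {..<n'} (QZi h)) (QXi h) smult (polys_lt k') (EXi h)
        \<and> compatible (\<lambda>x z. ftrace \<gamma> (fmul \<gamma> x z)) (*) {..<n'} (polys_lt k') (EXi h) (EZi h)"
    and outerX: "\<forall>h<3. is_enc (polys_lt k') (fmul \<gamma>) (dual (polys_lt k') (fmul \<gamma>) {..<n} (QZo h)) (QXo h)
             (smul (fmul \<gamma>)) (vecs (polys_lt k') {..<k}) (EXo h)
        \<and> compatible (dotp (fmul \<gamma>) {..<k}) (fmul \<gamma>) {..<n} (vecs (polys_lt k') {..<k}) (EXo h) (EZo h)"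
  shows "(\<forall>h<3.
      let QXt = space_of (vecs (polys_lt k') {..<k}) (concat_enc n n' (EXi h) (EXo h));
          QZt = space_of (vecs (polys_lt r) {..<k}) (concat_enc n n' (EZi h) (EZo h));
          Et = (\<lambda>z. space_of (ev_inv k r A z) (concat_enc n n' (EZi h) (EZo h)));
          I = {..<n} \<times> {..<n'}
      in is_css UNIV (*) I QXt QZt
         \<and> css_dim UNIV (*) I QXt QZt (r * k)
         \<and> is_enc UNIV (*) (dual UNIV (*) I QXt) QZt (smul (*)) (vecs UNIV ({..<k} \<times> A)) Et
         \<and> css_dist_ge UNIV (*) I QXt QZt (di h * dout h))
    \<and> transversal_ccz UNIV (*) ({..<n} \<times> {..<n'}) ({..<k} \<times> A)
        (\<lambda>z. space_of (ev_inv k r A z) (concat_enc n n' (EZi 0) (EZo 0)))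
        (\<lambda>z. space_of (ev_inv k r A z) (concat_enc n n' (EZi 1) (EZo 1)))
        (\<lambda>z. space_of (ev_inv k r A z) (concat_enc n n' (EZi 2) (EZo 2)))"
proof -
  have gamma_nonzero: "\<gamma> \<noteq> 0" using gamma_irr by auto
  have degree_pos: "degree \<gamma> > 0"
    using gamma_irr irreducible_not_unit is_unit_iff_degree[OF gamma_nonzero] by auto
  have r_le: "r \<le> degree \<gamma>" using r_bound gamma_deg by linarith
  have IC: "inner_code \<gamma> n' (QXi h) (QZi h) (EZi h) (EXi h)" if "h < 4" for h
    unfolding inner_code_def using inner innerX that gamma_nonzero degree_pos gamma_deg by auto
  have RC: "restricted_concat \<gamma> n' (QXi h) (QZi h) (EZi h) (EXi h) n k r A (QXo h) (QZo h) (EZo h) (EXo h)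
      (di h) (dout h)" if h: "h < 3" for h
  proof -
    have "css_dist_ge UNIV (*) {..<n'} (QXi h) (QZi h) (di h)"
      and "css_dist_ge (polys_lt k') (fmul \<gamma>) {..<n} (QXo h) (QZo h) (dout h)"
      using inner outer h by (simp_all add: css_dist_imp_dist_ge)
    then show ?thesis
      unfolding restricted_concat_def restricted_concat_axioms_def
      using IC[of h] h outer outerX r_le A_card gamma_deg by auto
  qed
  show ?thesis
    using restricted_concat.restricted_concat_code[OF RC]
      restricted_transversal_ccz[OF IC RC mf _ r_bound[folded gamma_deg]] outer_ccz gamma_deg
    by (simp add: Let_def)
qed

end
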